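(* For every Følner sequence $\Phi$ on $\mathbb{N}$ and any $f\in L^2(\mathbb{N},\Phi)$ there are a subsequence $\Psi$ of $\Phi$ and functions $f_{\mathsf{Bes}}\in\mathsf{Bes}(\mathbb{N},\Psi)$ and $f_{\mathsf{anti}}\in\mathsf{Bes}(\mathbb{N},\Psi)^\perp$ such that $f=f_{\mathsf{Bes}}+f_{\mathsf{anti}}$. Moreover, $\|f-f_{\mathsf{Bes}}\|_\Psi=\inf\{\|f-g\|_\Psi: g\in\mathsf{Bes}(\mathbb{N},\Psi)\}$, and if $f$ takes values in an interval $[a,b]$, then so does $f_{\mathsf{Bes}}$.
   Context: A Følner sequence in $\mathbb{N}$ is a sequence $\Phi\colon N\mapsto\Phi_N$ of finite non-empty subsets of $\mathbb{N}$ with $|(\Phi_N+m)\triangle\Phi_N|/|\Phi_N|\to0$ for all $m\in\mathbb{N}$. $\|f\|_\Phi=\big(\limsup_{N\to\infty}\frac{1}{|\Phi_N|}\sum_{n\in\Phi_N}|f(n)|^2\big)^{1/2}$ and $L^2(\mathbb{N},\Phi)=\{f\colon\mathbb{N}\to\mathbb{C}:\|f\|_\Phi<\infty\}$. A trigonometric polynomial is a function $n\mapsto\sum_{j=1}^J c_je^{2\pi i\theta_j n}$ with $c_j\in\mathbb{C}$, $\theta_j\in[0,1)$. $\mathsf{Bes}(\mathbb{N},\Phi)$ is the set of $f\colon\mathbb{N}\to\mathbb{C}$ such that for every $\epsilon>0$ there is a trigonometric polynomial $a$ with $\|f-a\|_\Phi<\epsilon$. $\mathsf{Bes}(\mathbb{N},\Phi)^\perp$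 is the set of $f\in L^2(\mathbb{N},\Phi)$ such that $\lim_{N\to\infty}\frac{1}{|\Phi_N|}\sum_{n\in\Phi_N}f(n)e^{2\pi i n\theta}=0$ for all $\theta\in[0,1)$. *)

theory Defs
  imports "HOL-Analysis.Analysis" "HOL-Library.Liminf_Limsup"
begin

definition foelner :: "(nat \<Rightarrow> nat set) \<Rightarrow> bool" where
  "foelner \<Phi> \<longleftrightarrow> (\<forall>N. finite (\<Phi> N) \<and> \<Phi> N \<noteq> {}) \<and>
     (\<forall>m::nat. (\<lambda>N. real (card (((\<lambda>n. n + m) ` \<Phi> N) - \<Phi> N \<union> (\<Phi> N - (\<lambda>n. n + m) ` \<Phi> N)))
                    / real (card (\<Phi> N))) \<longlonglongrightarrow> 0)"

definition favg :: "(nat \<Rightarrow> nat set) \<Rightarrow> (nat \<Rightarrow> 'a::real_normed_field) \<Rightarrow> nat \<Rightarrow> 'a" where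
  "favg \<Phi> g N = (\<Sum>n\<in>\<Phi> N. g n) / of_nat (card (\<Phi> N))"

definition sqnorm :: "(nat \<Rightarrow> nat set) \<Rightarrow> (nat \<Rightarrow> complex) \<Rightarrow> ereal" where
  "sqnorm \<Phi> f = limsup (\<lambda>N. ereal (favg \<Phi> (\<lambda>n. (cmod (f n))\<^sup>2) N))"

text \<open>The seminorm itself (meaningful for f in L2).\<close>
definition snorm :: "(nat \<Rightarrow> nat set) \<Rightarrow> (nat \<Rightarrow> complex) \<Rightarrow> real" where
  "snorm \<Phi> f = sqrt (real_of_ereal (sqnorm \<Phi> f))"

definition L2 :: "(nat \<Rightarrow> nat set) \<Rightarrow> (nat \<Rightarrow> complex) set" where
  "L2 \<Phi> = {f. sqnorm \<Phi> f < \<infinity>}"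

definition trig_poly :: "(nat \<Rightarrow> complex) \<Rightarrow> bool" where
  "trig_poly a \<longleftrightarrow> (\<exists>J::nat. \<exists>c::nat \<Rightarrow> complex. \<exists>\<theta>::nat \<Rightarrow> real.
      (\<forall>j. 0 \<le> \<theta> j \<and> \<theta> j < 1) \<and>
      a = (\<lambda>n. \<Sum>j\<in>{1..J}. c j * exp (2 * of_real pi * \<i> * of_real (\<theta> j) * of_nat n)))"

definition Bes :: "(nat \<Rightarrow> nat set) \<Rightarrow> (nat \<Rightarrow> complex) set" where
  "Bes \<Phi> = {f. \<forall>\<epsilon>>0. \<exists>a. trig_poly a \<and> sqnorm \<Phi> (\<lambda>n. f n - a n) < ereal (\<epsilon>\<^sup>2)}"

definition Bes_perp :: "(nat \<Rightarrow> nat set) \<Rightarrow> (nat \<Rightarrow> complex) set" where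
  "Bes_perp \<Phi> = {f \<in> L2 \<Phi>. \<forall>\<theta>::real. 0 \<le> \<theta> \<and> \<theta> < 1 \<longrightarrow>
      (\<lambda>N. favg \<Phi> (\<lambda>n. f n * exp (2 * of_real pi * \<i> * of_nat n * of_real \<theta>)) N) \<longlonglongrightarrow> 0}"

end

theory Submission
  imports Defs
begin

text \<open>
  Along a suitable subsequence of the Foelner sequence the Fourier coefficients
  avg_N f(n) e(n\<theta>) of f converge for every frequency \<theta>. This is a diagonal argument:
  Bessel's inequality bounds the sum of the squared limits, so at each stage one may fix a new
  frequency whose coefficient is at least half of the largest one still available, and after
  countably many stages all remaining coefficients tend to zero. The limits c_k at the chosen
  frequencies t_k are square summable. The Besicovitch part glues the partial sums
  sum_{k<j} c_k e(-t_k n) along consecutive blocks of the naturals, and a further subsequence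
  of averaging sets is chosen so that the j-th averaging set essentially lies in the j-th
  block; then the remainder has vanishing Fourier coefficients.

  Minimality of the distance is Pythagoras' theorem for the semi-inner product. If f is real
  with values in an interval, clipping the Besicovitch part to that interval changes it only by
  a null function: clipping is the nearest-point projection onto a convex set, so the change
  is negatively correlated with the remainder, which is orthogonal to it.
\<close>

section \<open>Characters and trigonometric polynomials\<close>

definition echar :: "real \<Rightarrow> nat \<Rightarrow> complex" where
  "echar a n = exp (2 * of_real pi * \<i> * of_real a * of_nat n)"

lemma echar_mult: "echar a n * echar b n = echar (a+b) n"
  unfolding echar_def by (simp add: exp_add[symmetric] algebra_simps)

lemma cnj_echar: "cnj (echar a n) = echar (-a) n"
  unfolding echar_def by (simp add: exp_cnj)

lemma norm_echar [simp]: "norm (echar a n) = 1"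
  unfolding echar_def by simp

lemma echar_0 [simp]: "echar 0 n = 1"
  unfolding echar_def by simp

lemma echar_of_int: "echar (of_int k) n = 1"
proof -
  have "echar (of_int k) n = exp ((2 * of_real (real_of_int (k * int n)) * pi) * \<i>)"
    unfolding echar_def by (simp add: algebra_simps)
  also have "\<dots> = 1" by (rule exp_integer_2pi) simp
  finally show ?thesis .
qed

lemma echar_frac: "echar (frac a) n = echar a n"
proof -
  have "echar a n = echar (frac a + of_int \<lfloor>a\<rfloor>) n" by (simp add: frac_def)
  also have "\<dots> = echar (frac a) n * echar (of_int \<lfloor>a\<rfloor>) n" by (simp add: echar_mult)
  finally show ?thesis by (simp add: echar_of_int)
qed

lemma echar_shift: "echar a (n + m) = echar a n * echar a m"
  unfolding echar_def by (simp add: exp_add[symmetric] algebra_simps)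

lemma echar_1_eq_1_imp_Ints: "echar a 1 = 1 \<Longrightarrow> a \<in> \<int>"
proof -
  assume "echar a 1 = 1"
  then have "exp (2 * of_real pi * \<i> * of_real a) = 1" by (simp add: echar_def)
  then obtain k :: int where "2 * pi * a = of_int (2*k) * pi" by (auto simp: exp_eq_1)
  then have "a = of_int k" by simp
  then show ?thesis by simp
qed

lemma trig_poly_iff_echar: "trig_poly a \<longleftrightarrow> (\<exists>J::nat. \<exists>c::nat \<Rightarrow> complex. \<exists>\<theta>::nat \<Rightarrow> real.
      (\<forall>j. 0 \<le> \<theta> j \<and> \<theta> j < 1) \<and> a = (\<lambda>n. \<Sum>j\<in>{1..J}. c j * echar (\<theta> j) n))"
  unfolding trig_poly_def echar_def by simp

lemma trig_poly_echar_sum: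
  fixes S :: "'i set"
  assumes "finite S"
  shows "trig_poly (\<lambda>n. \<Sum>x\<in>S. c x * echar (\<theta> x) n)"
proof -
  obtain h where h: "bij_betw h {1..card S} S" using ex_bij_betw_nat_finite_1[OF assms] by blast
  have "(\<Sum>x\<in>S. c x * echar (\<theta> x) n) = (\<Sum>j\<in>{1..card S}. c (h j) * echar (frac (\<theta> (h j))) n)" for n
    using sum.reindex_bij_betw[OF h, of "\<lambda>x. c x * echar (\<theta> x) n"] by (simp only: echar_frac)
  then have eq: "(\<lambda>n. \<Sum>x\<in>S. c x * echar (\<theta> x) n) = (\<lambda>n. \<Sum>j\<in>{1..card S}. c (h j) * echar (frac (\<theta> (h j))) n)"
    by (rule ext)
  have rng: "\<forall>j. 0 \<le> frac (\<theta> (h j)) \<and> frac (\<theta> (h j)) < 1" by (simp add: frac_lt_1)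
  show ?thesis unfolding trig_poly_iff_echar
    by (rule exI[of _ "card S"], rule exI[of _ "\<lambda>j. c (h j)"], rule exI[of _ "\<lambda>j. frac (\<theta> (h j))"])
       (use eq rng in simp)
qed

lemma trig_polyE:
  assumes "trig_poly a"
  obtains S :: "nat set" and c \<theta> where "finite S" "a = (\<lambda>n. \<Sum>x\<in>S. c x * echar (\<theta> x) n)"
  using assms unfolding trig_poly_iff_echar by blast

lemma trig_poly_const: "trig_poly (\<lambda>n. c)"
  using trig_poly_echar_sum[of "{0::nat}" "\<lambda>_. c" "\<lambda>_. 0"] by simp

lemma trig_poly_add:
  assumes "trig_poly a" "trig_poly b"
  shows "trig_poly (\<lambda>n. a n + b n)"
proof -
  obtain S1 :: "nat set" and c1 t1 where 1: "finite S1" "a = (\<lambda>n. \<Sum>x\<in>S1. c1 x * echar (t1 x) n)"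
    using trig_polyE[OF assms(1)] by metis
  obtain S2 :: "nat set" and c2 t2 where 2: "finite S2" "b = (\<lambda>n. \<Sum>x\<in>S2. c2 x * echar (t2 x) n)"
    using trig_polyE[OF assms(2)] by metis
  let ?c = "case_sum c1 c2" and ?t = "case_sum t1 t2"
  have "(\<lambda>n. a n + b n) = (\<lambda>n. \<Sum>x\<in>S1 <+> S2. ?c x * echar (?t x) n)"
    using 1 2 by (simp add: sum.Plus o_def)
  then show ?thesis using trig_poly_echar_sum[of "S1 <+> S2" ?c ?t] 1 2 by simp
qed

lemma trig_poly_mult:
  assumes "trig_poly a" "trig_poly b"
  shows "trig_poly (\<lambda>n. a n * b n)"
proof -
  obtain S1 :: "nat set" and c1 t1 where 1: "finite S1" "a = (\<lambda>n. \<Sum>x\<in>S1. c1 x * echar (t1 x) n)"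
    using trig_polyE[OF assms(1)] by metis
  obtain S2 :: "nat set" and c2 t2 where 2: "finite S2" "b = (\<lambda>n. \<Sum>x\<in>S2. c2 x * echar (t2 x) n)"
    using trig_polyE[OF assms(2)] by metis
  let ?c = "\<lambda>(i,j). c1 i * c2 j" and ?t = "\<lambda>(i,j). t1 i + t2 j"
  have "a n * b n = (\<Sum>x\<in>S1 \<times> S2. ?c x * echar (?t x) n)" for n
    unfolding 1 2 sum_product sum.cartesian_product
    by (rule sum.cong) (auto simp: echar_mult[symmetric] mult_ac)
  then have "(\<lambda>n. a n * b n) = (\<lambda>n. \<Sum>x\<in>S1 \<times> S2. ?c x * echar (?t x) n)" by blast
  then show ?thesis using trig_poly_echar_sum[of "S1 \<times> S2" ?c ?t] 1 2 by simp
qed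

lemma trig_poly_cnj:
  assumes "trig_poly a"
  shows "trig_poly (\<lambda>n. cnj (a n))"
proof -
  obtain S1 :: "nat set" and c1 t1 where 1: "finite S1" "a = (\<lambda>n. \<Sum>x\<in>S1. c1 x * echar (t1 x) n)"
    using trig_polyE[OF assms(1)] by metis
  have "(\<lambda>n. cnj (a n)) = (\<lambda>n. \<Sum>x\<in>S1. cnj (c1 x) * echar (- t1 x) n)"
    using 1 by (simp add: cnj_echar)
  then show ?thesis using trig_poly_echar_sum[of S1] 1 by simp
qed

lemma trig_poly_cmult: "trig_poly a \<Longrightarrow> trig_poly (\<lambda>n. c * a n)"
  using trig_poly_mult[OF trig_poly_const] by blast

lemma trig_poly_diff: "trig_poly a \<Longrightarrow> trig_poly b \<Longrightarrow> trig_poly (\<lambda>n. a n - b n)"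
  using trig_poly_add[of a "\<lambda>n. (-1) * b n"] trig_poly_cmult[of b "-1"] by simp

lemma trig_poly_bounded:
  assumes "trig_poly a"
  obtains M where "\<And>n. norm (a n) \<le> M"
proof -
  obtain S1 :: "nat set" and c1 t1 where 1: "finite S1" "a = (\<lambda>n. \<Sum>x\<in>S1. c1 x * echar (t1 x) n)"
    using trig_polyE[OF assms(1)] by metis
  have "norm (a n) \<le> (\<Sum>x\<in>S1. norm (c1 x))" for n
    unfolding 1 by (rule order.trans[OF norm_sum]) (simp add: norm_mult)
  then show ?thesis using that by blast
qed

lemma trig_poly_Re: "trig_poly a \<Longrightarrow> trig_poly (\<lambda>n. of_real (Re (a n)))"
  using trig_poly_cmult[OF trig_poly_add[OF _ trig_poly_cnj], of a a "1/2"]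
  by (simp add: complex_add_cnj)

lemma trig_poly_Im: "trig_poly a \<Longrightarrow> trig_poly (\<lambda>n. of_real (Im (a n)))"
proof -
  assume a: "trig_poly a"
  have "(\<lambda>n. of_real (Im (a n))) = (\<lambda>n. (-\<i>/2) * (a n - cnj (a n)))"
    by (rule ext) (simp add: complex_diff_cnj field_simps)
  then show ?thesis using trig_poly_cmult[OF trig_poly_diff[OF a trig_poly_cnj[OF a]], of "-\<i>/2"] by simp
qed

lemma trig_poly_real_polynomial_comp:
  fixes p :: "complex \<Rightarrow> real"
  assumes "real_polynomial_function p" and a: "trig_poly a"
  shows "trig_poly (\<lambda>n. complex_of_real (p (a n)))"
  using assms(1)
proof (induction p)
  case (linear p)
  have eq: "p z = Re z * p 1 + Im z * p \<i>" for z
  proof -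
    have zz: "Re z *\<^sub>R 1 + Im z *\<^sub>R \<i> = z" by (simp add: complex_eq_iff)
    have "p (Re z *\<^sub>R 1 + Im z *\<^sub>R \<i>) = Re z *\<^sub>R p 1 + Im z *\<^sub>R p \<i>"
      using linear_add[OF bounded_linear.linear[OF linear]] linear_scale[OF bounded_linear.linear[OF linear]] by simp
    then show ?thesis unfolding zz by simp
  qed
  have "complex_of_real (p (a n)) = of_real (p 1) * of_real (Re (a n)) + of_real (p \<i>) * of_real (Im (a n))" for n
  proof -
    have "p (a n) = Re (a n) * p 1 + Im (a n) * p \<i>" by (rule eq)
    then show ?thesis by (simp only: of_real_add of_real_mult mult.commute)
  qed
  then have "(\<lambda>n. complex_of_real (p (a n))) = (\<lambda>n. of_real (p 1) * of_real (Re (a n)) + of_real (p \<i>) * of_real (Im (a n)))"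
    by (rule ext)
  moreover have "trig_poly (\<lambda>n. of_real (p 1) * of_real (Re (a n)) + of_real (p \<i>) * complex_of_real (Im (a n)))"
    by (intro trig_poly_add trig_poly_cmult trig_poly_Re trig_poly_Im a)
  ultimately show ?case by simp
next
  case (const c)
  then show ?case by (rule trig_poly_const)
next
  case (add f g)
  then show ?case using trig_poly_add[OF add.IH] by simp
next
  case (mult f g)
  then show ?case using trig_poly_mult[OF mult.IH] by simp
qed

lemma trig_poly_polynomial_comp:
  fixes g :: "complex \<Rightarrow> complex"
  assumes g: "polynomial_function g" and a: "trig_poly a"
  shows "trig_poly (\<lambda>n. g (a n))"
proof -
  have r: "real_polynomial_function (Re \<circ> g)" and i: "real_polynomial_function (Im \<circ> g)"
    using g bounded_linear_Re bounded_linear_Im unfolding polynomial_function_def by blast+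
  have "trig_poly (\<lambda>n. complex_of_real ((Re \<circ> g) (a n)) + \<i> * complex_of_real ((Im \<circ> g) (a n)))"
    by (intro trig_poly_add trig_poly_cmult trig_poly_real_polynomial_comp r i a)
  moreover have "(\<lambda>n. complex_of_real ((Re \<circ> g) (a n)) + \<i> * complex_of_real ((Im \<circ> g) (a n))) = (\<lambda>n. g (a n))"
    by (rule ext) (simp add: complex_eq_iff)
  ultimately show ?thesis by simp
qed

section \<open>Averages along sequences of finite sets\<close>

definition finite_nonempty_seq :: "(nat \<Rightarrow> nat set) \<Rightarrow> bool" where
  "finite_nonempty_seq \<Phi> \<longleftrightarrow> (\<forall>N. finite (\<Phi> N) \<and> \<Phi> N \<noteq> {})"

definition foelner_defect :: "(nat \<Rightarrow> nat set) \<Rightarrow> nat \<Rightarrow> nat \<Rightarrow> real" where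
  "foelner_defect \<Phi> m N = real (card (((\<lambda>n. n + m) ` \<Phi> N) - \<Phi> N \<union> (\<Phi> N - (\<lambda>n. n + m) ` \<Phi> N)))
                    / real (card (\<Phi> N))"

lemma foelner_iff_defect:
  "foelner \<Phi> \<longleftrightarrow> finite_nonempty_seq \<Phi> \<and> (\<forall>m. foelner_defect \<Phi> m \<longlonglongrightarrow> 0)"
  unfolding foelner_def finite_nonempty_seq_def foelner_defect_def ..

lemma foelner_finite_nonempty: "foelner \<Phi> \<Longrightarrow> finite_nonempty_seq \<Phi>"
  by (simp add: foelner_iff_defect)

lemma foelner_defect_tendsto: "foelner \<Phi> \<Longrightarrow> foelner_defect \<Phi> m \<longlonglongrightarrow> 0"
  by (simp add: foelner_iff_defect)

lemma finite_nonempty_seq_comp: "finite_nonempty_seq \<Phi> \<Longrightarrow> finite_nonempty_seq (\<Phi> \<circ> \<sigma>)"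
  unfolding finite_nonempty_seq_def by simp

lemma finite_nonempty_seq_card_pos: "finite_nonempty_seq \<Phi> \<Longrightarrow> card (\<Phi> N) > 0"
  unfolding finite_nonempty_seq_def by (simp add: card_gt_0_iff)

lemma finite_nonempty_seq_finite: "finite_nonempty_seq \<Phi> \<Longrightarrow> finite (\<Phi> N)"
  unfolding finite_nonempty_seq_def by simp

lemma foelner_comp:
  assumes "foelner \<Phi>" "strict_mono \<sigma>"
  shows "foelner (\<Phi> \<circ> \<sigma>)"
proof -
  have "foelner_defect (\<Phi> \<circ> \<sigma>) m = foelner_defect \<Phi> m \<circ> \<sigma>" for m
    by (simp add: foelner_defect_def fun_eq_iff)
  then have "foelner_defect (\<Phi> \<circ> \<sigma>) m \<longlonglongrightarrow> 0" for m
    using LIMSEQ_subseq_LIMSEQ[OF foelner_defect_tendsto[OF assms(1)] assms(2)] by simp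
  then show ?thesis using assms(1) by (simp add: foelner_iff_defect finite_nonempty_seq_comp)
qed

lemma favg_comp: "favg (\<Phi> \<circ> \<sigma>) g N = favg \<Phi> g (\<sigma> N)"
  unfolding favg_def by simp

lemma favg_add: "favg \<Phi> (\<lambda>n. g n + h n) N = favg \<Phi> g N + favg \<Phi> h N"
  unfolding favg_def by (simp add: sum.distrib add_divide_distrib)

lemma favg_diff: "favg \<Phi> (\<lambda>n. g n - h n) N = favg \<Phi> g N - favg \<Phi> h N"
  unfolding favg_def by (simp add: sum_subtractf diff_divide_distrib)

lemma favg_neg: "favg \<Psi> (\<lambda>n. - g n) N = - favg \<Psi> g N"
  unfolding favg_def by (simp add: sum_negf)

lemma favg_cmult: "favg \<Phi> (\<lambda>n. c * g n) N = c * favg \<Phi> g N"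
  unfolding favg_def by (simp add: sum_distrib_left)

lemma favg_sum: "favg \<Phi> (\<lambda>n. \<Sum>i\<in>I. g i n) N = (\<Sum>i\<in>I. favg \<Phi> (g i) N)"
  unfolding favg_def by (simp add: sum.swap[of _ I] sum_divide_distrib)

lemma favg_const: "finite_nonempty_seq \<Phi> \<Longrightarrow> favg \<Phi> (\<lambda>n. c) N = c"
  unfolding favg_def using finite_nonempty_seq_card_pos[of \<Phi> N] by simp

lemma favg_Re: "Re (favg \<Phi> g N) = favg \<Phi> (\<lambda>n. Re (g n)) N"
  unfolding favg_def by (simp add: Re_divide_of_nat)

lemma favg_mono:
  fixes g h :: "nat \<Rightarrow> real"
  assumes "\<And>n. n \<in> \<Phi> N \<Longrightarrow> g n \<le> h n"
  shows "favg \<Phi> g N \<le> favg \<Phi> h N"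
  unfolding favg_def by (rule divide_right_mono) (auto intro: sum_mono assms)

lemma favg_nonneg:
  fixes g :: "nat \<Rightarrow> real"
  assumes "\<And>n. n \<in> \<Phi> N \<Longrightarrow> 0 \<le> g n"
  shows "0 \<le> favg \<Phi> g N"
  unfolding favg_def by (auto intro!: divide_nonneg_nonneg sum_nonneg assms)

lemma favg_le_const:
  fixes g :: "nat \<Rightarrow> real"
  assumes "\<And>n. g n \<le> M" "0 \<le> M"
  shows "favg \<Phi> g N \<le> M"
proof -
  have "favg \<Phi> g N \<le> favg \<Phi> (\<lambda>n. M) N" by (rule favg_mono) (rule assms(1))
  also have "\<dots> \<le> M" unfolding favg_def using assms(2) by (simp add: divide_le_eq)
  finally show ?thesis .
qed

lemma norm_favg: "norm (favg \<Phi> (g :: nat \<Rightarrow> complex) N) \<le> favg \<Phi> (\<lambda>n. norm (g n)) N"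
  unfolding favg_def by (simp add: norm_divide divide_right_mono norm_sum)

lemma favg_sq_norm_nonneg: "0 \<le> favg \<Phi> (\<lambda>n. (cmod (g n))\<^sup>2) N"
  by (rule favg_nonneg) simp

lemma favg_sq_norm_eq_Re: "favg \<Psi> (\<lambda>n. (cmod (g n))\<^sup>2) N = Re (favg \<Psi> (\<lambda>n. g n * cnj (g n)) N)"
  by (simp add: favg_Re complex_mult_cnj cmod_power2)

lemma norm_favg_mult_cnj_power2_le:
  "(cmod (favg \<Phi> (\<lambda>n. x n * cnj (y n)) N))\<^sup>2
     \<le> favg \<Phi> (\<lambda>n. (cmod (x n))\<^sup>2) N * favg \<Phi> (\<lambda>n. (cmod (y n))\<^sup>2) N"
proof -
  let ?k = "real (card (\<Phi> N))"
  have "cmod (favg \<Phi> (\<lambda>n. x n * cnj (y n)) N) \<le> favg \<Phi> (\<lambda>n. cmod (x n) * cmod (y n)) N"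
    using norm_favg[of \<Phi> "\<lambda>n. x n * cnj (y n)" N] by (simp add: norm_mult)
  then have "(cmod (favg \<Phi> (\<lambda>n. x n * cnj (y n)) N))\<^sup>2 \<le> (favg \<Phi> (\<lambda>n. cmod (x n) * cmod (y n)) N)\<^sup>2"
    by (intro power_mono) simp_all
  also have "\<dots> = (\<Sum>n\<in>\<Phi> N. cmod (x n) * cmod (y n))\<^sup>2 / ?k\<^sup>2"
    unfolding favg_def by (simp add: power_divide)
  also have "\<dots> \<le> ((\<Sum>n\<in>\<Phi> N. (cmod (x n))\<^sup>2) * (\<Sum>n\<in>\<Phi> N. (cmod (y n))\<^sup>2)) / ?k\<^sup>2"
    by (intro divide_right_mono Cauchy_Schwarz_ineq_sum) simp
  also have "\<dots> = favg \<Phi> (\<lambda>n. (cmod (x n))\<^sup>2) N * favg \<Phi> (\<lambda>n. (cmod (y n))\<^sup>2) N"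
    unfolding favg_def by (simp add: power2_eq_square)
  finally show ?thesis .
qed

section \<open>The seminorm and the space L2\<close>

lemma sqnorm_nonneg: "0 \<le> sqnorm \<Phi> g"
  unfolding sqnorm_def by (rule le_Limsup) (auto intro!: always_eventually favg_sq_norm_nonneg)

lemma sqnorm_le_eventually:
  assumes "eventually (\<lambda>N. favg \<Phi> (\<lambda>n. (cmod (g n))\<^sup>2) N \<le> r) sequentially"
  shows "sqnorm \<Phi> g \<le> ereal r"
  unfolding sqnorm_def by (rule Limsup_bounded) (use assms in \<open>auto elim: eventually_mono\<close>)

lemma sqnorm_lessD:
  assumes "sqnorm \<Phi> g < ereal r"
  shows "eventually (\<lambda>N. favg \<Phi> (\<lambda>n. (cmod (g n))\<^sup>2) N < r) sequentially"
  using Limsup_lessD[OF assms[unfolded sqnorm_def]] by simp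

lemma sqnorm_eq_0_iff:
  "sqnorm \<Phi> g = 0 \<longleftrightarrow> (\<lambda>N. favg \<Phi> (\<lambda>n. (cmod (g n))\<^sup>2) N) \<longlonglongrightarrow> 0"
proof
  assume g: "sqnorm \<Phi> g = 0"
  show "(\<lambda>N. favg \<Phi> (\<lambda>n. (cmod (g n))\<^sup>2) N) \<longlonglongrightarrow> 0"
  proof (rule order_tendstoI)
    fix a :: real assume "0 < a"
    then show "eventually (\<lambda>N. favg \<Phi> (\<lambda>n. (cmod (g n))\<^sup>2) N < a) sequentially"
      using g by (intro sqnorm_lessD) simp
  next
    fix a :: real assume "a < 0"
    then show "eventually (\<lambda>N. a < favg \<Phi> (\<lambda>n. (cmod (g n))\<^sup>2) N) sequentially"
      using favg_sq_norm_nonneg by (intro always_eventually allI) (auto intro: less_le_trans)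
  qed
next
  assume "(\<lambda>N. favg \<Phi> (\<lambda>n. (cmod (g n))\<^sup>2) N) \<longlonglongrightarrow> 0"
  then have "(\<lambda>N. ereal (favg \<Phi> (\<lambda>n. (cmod (g n))\<^sup>2) N)) \<longlonglongrightarrow> ereal 0"
    by (rule tendsto_ereal)
  from lim_imp_Limsup[OF _ this] show "sqnorm \<Phi> g = 0"
    unfolding sqnorm_def by (simp add: zero_ereal_def)
qed

lemma sqnorm_le_plus_tendsto_0:
  assumes le: "\<And>N. favg \<Phi> (\<lambda>n. (cmod (u n))\<^sup>2) N \<le> favg \<Phi> (\<lambda>n. (cmod (v n))\<^sup>2) N + e N"
    and e: "e \<longlonglongrightarrow> 0"
  shows "sqnorm \<Phi> u \<le> sqnorm \<Phi> v"
proof -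
  have "sqnorm \<Phi> u \<le> limsup (\<lambda>N. ereal (favg \<Phi> (\<lambda>n. (cmod (v n))\<^sup>2) N) + ereal (e N))"
    unfolding sqnorm_def by (intro Limsup_mono always_eventually allI) (simp add: le)
  also have "\<dots> \<le> sqnorm \<Phi> v + limsup (\<lambda>N. ereal (e N))"
    unfolding sqnorm_def by (rule ereal_limsup_add_mono)
  also have "limsup (\<lambda>N. ereal (e N)) = 0"
    using lim_imp_Limsup[OF _ tendsto_ereal[OF e]] by (simp add: zero_ereal_def)
  finally show ?thesis by simp
qed

lemma sqnorm_le_const:
  assumes "\<And>n. cmod (u n) \<le> M"
  shows "sqnorm \<Phi> u \<le> ereal (M\<^sup>2)"
proof (rule sqnorm_le_eventually, rule always_eventually, rule allI)
  have "0 \<le> M" using order_trans[OF norm_ge_zero assms] .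
  then show "favg \<Phi> (\<lambda>n. (cmod (u n))\<^sup>2) N \<le> M\<^sup>2" for N
    by (intro favg_le_const power_mono assms) simp_all
qed

lemma norm_diff_power2_le: "(cmod (a - b))\<^sup>2 \<le> 2 * (cmod a)\<^sup>2 + 2 * (cmod b)\<^sup>2"
proof -
  have "(cmod (a - b))\<^sup>2 \<le> (cmod a + cmod b)\<^sup>2" by (intro power_mono norm_triangle_ineq4) simp
  also have "\<dots> \<le> 2 * (cmod a)\<^sup>2 + 2 * (cmod b)\<^sup>2"
    using sum_squares_bound[of "cmod a" "cmod b"] by (simp add: power2_eq_square algebra_simps)
  finally show ?thesis .
qed

lemma sqnorm_diff_le: "sqnorm \<Phi> (\<lambda>n. u n - v n) \<le> 2 * sqnorm \<Phi> u + 2 * sqnorm \<Phi> v"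
proof -
  let ?U = "\<lambda>N. ereal 2 * ereal (favg \<Phi> (\<lambda>n. (cmod (u n))\<^sup>2) N)"
  let ?V = "\<lambda>N. ereal 2 * ereal (favg \<Phi> (\<lambda>n. (cmod (v n))\<^sup>2) N)"
  have "favg \<Phi> (\<lambda>n. (cmod (u n - v n))\<^sup>2) N
      \<le> 2 * favg \<Phi> (\<lambda>n. (cmod (u n))\<^sup>2) N + 2 * favg \<Phi> (\<lambda>n. (cmod (v n))\<^sup>2) N" for N
    unfolding favg_cmult[symmetric] favg_add[symmetric] by (intro favg_mono norm_diff_power2_le)
  then have "sqnorm \<Phi> (\<lambda>n. u n - v n) \<le> limsup (\<lambda>N. ?U N + ?V N)"
    unfolding sqnorm_def by (intro Limsup_mono always_eventually allI) simp
  also have "\<dots> \<le> limsup ?U + limsup ?V" by (rule ereal_limsup_add_mono)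
  also have "limsup ?U = 2 * sqnorm \<Phi> u"
    unfolding sqnorm_def by (subst limsup_ereal_mult_left) simp_all
  also have "limsup ?V = 2 * sqnorm \<Phi> v"
    unfolding sqnorm_def by (subst limsup_ereal_mult_left) simp_all
  finally show ?thesis .
qed

lemma L2I: "sqnorm \<Phi> g \<le> ereal r \<Longrightarrow> g \<in> L2 \<Phi>"
  unfolding L2_def using le_less_trans[OF _ ereal_less_PInfty[of r]] by simp

lemma L2_real_sqnorm:
  assumes "g \<in> L2 \<Phi>"
  obtains s where "sqnorm \<Phi> g = ereal s"
  using assms sqnorm_nonneg[of \<Phi> g] unfolding L2_def by (cases "sqnorm \<Phi> g") auto

lemma L2_eventually_bounded:
  assumes "g \<in> L2 \<Phi>"
  obtains r where "eventually (\<lambda>N. favg \<Phi> (\<lambda>n. (cmod (g n))\<^sup>2) N < r) sequentially"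
proof -
  obtain s where "sqnorm \<Phi> g = ereal s" using L2_real_sqnorm[OF assms] .
  then have "sqnorm \<Phi> g < ereal (s + 1)" by simp
  from sqnorm_lessD[OF this] that show ?thesis by blast
qed

lemma L2_favg_bounded:
  assumes "g \<in> L2 \<Phi>"
  obtains B where "\<And>N. favg \<Phi> (\<lambda>n. (cmod (g n))\<^sup>2) N \<le> B"
proof -
  obtain r where "eventually (\<lambda>N. favg \<Phi> (\<lambda>n. (cmod (g n))\<^sup>2) N < r) sequentially"
    using L2_eventually_bounded[OF assms] by blast
  then obtain N0 where N0: "\<And>N. N \<ge> N0 \<Longrightarrow> favg \<Phi> (\<lambda>n. (cmod (g n))\<^sup>2) N < r"
    unfolding eventually_sequentially by blast
  let ?B = "r + (\<Sum>N<N0. favg \<Phi> (\<lambda>n. (cmod (g n))\<^sup>2) N)"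
  have "favg \<Phi> (\<lambda>n. (cmod (g n))\<^sup>2) N \<le> ?B" for N
  proof (cases "N < N0")
    case True
    have "favg \<Phi> (\<lambda>n. (cmod (g n))\<^sup>2) N \<le> (\<Sum>N<N0. favg \<Phi> (\<lambda>n. (cmod (g n))\<^sup>2) N)"
      by (rule member_le_sum) (use True favg_sq_norm_nonneg in auto)
    moreover have "0 \<le> r" using N0[of N0] favg_sq_norm_nonneg[of \<Phi> g N0] by simp
    ultimately show ?thesis by simp
  next
    case False
    moreover have "0 \<le> (\<Sum>N<N0. favg \<Phi> (\<lambda>n. (cmod (g n))\<^sup>2) N)"
      by (rule sum_nonneg) (use favg_sq_norm_nonneg in auto)
    ultimately show ?thesis using N0[of N] by simp
  qed
  then show ?thesis using that by blast
qed

lemma L2_diff: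
  assumes "a \<in> L2 \<Psi>" "b \<in> L2 \<Psi>"
  shows "(\<lambda>n. a n - b n) \<in> L2 \<Psi>"
proof -
  obtain x y where "sqnorm \<Psi> a = ereal x" "sqnorm \<Psi> b = ereal y"
    using L2_real_sqnorm assms by metis
  then show ?thesis using sqnorm_diff_le[of \<Psi> a b] by (intro L2I[of _ _ "2 * x + 2 * y"]) simp
qed

section \<open>Averages of characters along Foelner sequences\<close>

lemma norm_sum_diff_le_card_symdiff:
  fixes g :: "nat \<Rightarrow> complex"
  assumes "finite A" "finite B" "\<And>n. norm (g n) \<le> 1"
  shows "norm (sum g A - sum g B) \<le> real (card (A - B \<union> (B - A)))"
proof -
  have "sum g A = sum g (A \<inter> B) + sum g (A - B)" using assms(1) by (rule sum.Int_Diff)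
  moreover have "sum g B = sum g (A \<inter> B) + sum g (B - A)"
    using sum.Int_Diff[OF assms(2), of g A] by (simp add: Int_commute)
  ultimately have "sum g A - sum g B = sum g (A - B) - sum g (B - A)" by simp
  then have "norm (sum g A - sum g B) \<le> norm (sum g (A - B)) + norm (sum g (B - A))"
    by (simp add: norm_triangle_ineq4)
  also have "norm (sum g (A - B)) \<le> real (card (A - B))"
    using sum_norm_le[of "A - B" g "\<lambda>_. 1"] assms by (simp add: norm_sum order_trans)
  also have "norm (sum g (B - A)) \<le> real (card (B - A))"
    using sum_norm_le[of "B - A" g "\<lambda>_. 1"] assms by (simp add: norm_sum order_trans)
  also have "real (card (A - B)) + real (card (B - A)) = real (card (A - B \<union> (B - A)))"
    using assms by (subst card_Un_disjoint) auto
  finally show ?thesis by simp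
qed

lemma favg_echar_tendsto_0:
  assumes F: "foelner \<Phi>" and a: "a \<notin> \<int>"
  shows "(\<lambda>N. favg \<Phi> (echar a) N) \<longlonglongrightarrow> 0"
proof -
  have finite_nonempty_seq: "finite_nonempty_seq \<Phi>" using F by (rule foelner_finite_nonempty)
  define q where "q = echar a 1 - 1"
  have q: "q \<noteq> 0" using echar_1_eq_1_imp_Ints[of a] a unfolding q_def by auto
  have bound: "norm (favg \<Phi> (echar a) N) \<le> foelner_defect \<Phi> 1 N / cmod q" for N
  proof -
    \<comment> \<open>shifting \<Phi> N by one multiplies the sum by echar a 1 \<noteq> 1, but changes it by at most
      the number of points in the symmetric difference\<close>
    let ?A = "(\<lambda>n. n + 1) ` \<Phi> N" and ?B = "\<Phi> N"
    have fin: "finite ?B" using finite_nonempty_seq by (rule finite_nonempty_seq_finite)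
    have "sum (echar a) ?A = (\<Sum>n\<in>?B. echar a (n + 1))"
      by (subst sum.reindex) (auto simp: inj_on_def)
    also have "\<dots> = (\<Sum>n\<in>?B. echar a 1 * echar a n)"
    proof -
      have eq: "echar a (n + 1) = echar a 1 * echar a n" for n
        using echar_shift[of a n 1] by (simp only: mult.commute)
      show ?thesis by (simp only: eq)
    qed
    also have "\<dots> = echar a 1 * sum (echar a) ?B"
      by (rule sum_distrib_left[symmetric])
    finally have "q * sum (echar a) ?B = sum (echar a) ?A - sum (echar a) ?B"
      unfolding q_def by (simp add: algebra_simps)
    then have "norm (q * sum (echar a) ?B) \<le> real (card (?A - ?B \<union> (?B - ?A)))"
      using norm_sum_diff_le_card_symdiff[of ?A ?B "echar a"] fin by simp
    then have "cmod q * norm (sum (echar a) ?B) / real (card ?B) \<le> foelner_defect \<Phi> 1 N"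
      unfolding foelner_defect_def by (simp add: norm_mult divide_right_mono)
    moreover have "norm (favg \<Phi> (echar a) N) = norm (sum (echar a) ?B) / real (card ?B)"
      unfolding favg_def by (simp add: norm_divide)
    ultimately show ?thesis using q by (simp add: field_simps)
  qed
  have "(\<lambda>N. foelner_defect \<Phi> 1 N / cmod q) \<longlonglongrightarrow> 0 / cmod q"
    by (intro tendsto_divide foelner_defect_tendsto F tendsto_const) (use q in simp)
  then have lim0: "(\<lambda>N. foelner_defect \<Phi> 1 N / cmod q) \<longlonglongrightarrow> 0" by simp
  show ?thesis
    by (rule Lim_null_comparison[OF always_eventually lim0]) (use bound in blast)
qed

lemma diff_unit_interval_not_Ints:
  fixes x y :: real
  assumes "0 \<le> x" "x < 1" "0 \<le> y" "y < 1" "x \<noteq> y"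
  shows "x - y \<notin> \<int>"
proof
  assume "x - y \<in> \<int>"
  then obtain k :: int where k: "x - y = of_int k" using Ints_cases by metis
  have "of_int k < (1::real)" "of_int k > (-1::real)" using assms k by linarith+
  then have "k < 1" "k > -1" by simp_all
  then have "k = 0" by linarith
  then have "x - y = 0" using k by simp
  then show False using assms(5) by simp
qed

lemma favg_echar_diff_tendsto:
  assumes F: "foelner \<Psi>" and "0 \<le> x" "x < 1" "0 \<le> y" "y < 1"
  shows "(\<lambda>N. favg \<Psi> (echar (x - y)) N) \<longlonglongrightarrow> (if x = y then 1 else 0)"
proof (cases "x = y")
  case True
  have "echar (x - y) = (\<lambda>n. 1)" using True by (intro ext) simp
  then have "favg \<Psi> (echar (x - y)) N = 1" for N
    using favg_const[OF foelner_finite_nonempty[OF F], of 1 N] by simp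
  then show ?thesis using True by simp
next
  case False
  then show ?thesis using favg_echar_tendsto_0[OF F diff_unit_interval_not_Ints[OF assms(2-5) False]] by simp
qed

lemma card_lessThan_le_block:
  fixes P :: "nat set"
  assumes "finite P"
  shows "card (P \<inter> {..<T})
    \<le> card (P \<inter> {i*T..<(i+1)*T}) + card ((\<lambda>n. n + i*T) ` P - P \<union> (P - (\<lambda>n. n + i*T) ` P))"
proof -
  have "card (P \<inter> {..<T}) = card ((\<lambda>n. n + i*T) ` (P \<inter> {..<T}))"
    by (rule card_image[symmetric]) (auto simp: inj_on_def)
  also have "\<dots> \<le> card (P \<inter> {i*T..<(i+1)*T} \<union> ((\<lambda>n. n + i*T) ` P - P \<union> (P - (\<lambda>n. n + i*T) ` P)))"
    by (rule card_mono) (use assms in auto)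
  also have "\<dots> \<le> card (P \<inter> {i*T..<(i+1)*T}) + card ((\<lambda>n. n + i*T) ` P - P \<union> (P - (\<lambda>n. n + i*T) ` P))"
    by (rule card_Un_le)
  finally show ?thesis .
qed

lemma sum_card_blocks_le:
  fixes P :: "nat set"
  assumes "finite P"
  shows "(\<Sum>i<J. card (P \<inter> {i*T..<(i+1)*T})) \<le> card P"
proof -
  have "(\<Sum>i<J. card (P \<inter> {i*T..<(i+1)*T})) = card (\<Union>i<J. P \<inter> {i*T..<(i+1)*T})"
  proof (rule card_UN_disjoint[symmetric])
    show "\<forall>i\<in>{..<J}. \<forall>j\<in>{..<J}. i \<noteq> j \<longrightarrow> P \<inter> {i * T..<(i + 1) * T} \<inter> (P \<inter> {j * T..<(j + 1) * T}) = {}"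
    proof (intro ballI impI)
      fix i j :: nat assume "i \<in> {..<J}" "j \<in> {..<J}" "i \<noteq> j"
      then have "i < j \<or> j < i" by arith
      then show "P \<inter> {i * T..<(i + 1) * T} \<inter> (P \<inter> {j * T..<(j + 1) * T}) = {}"
      proof
        assume "i < j" then have "(i+1)*T \<le> j * T" by (intro mult_right_mono) auto
        then show ?thesis by auto
      next
        assume "j < i" then have "(j+1)*T \<le> i * T" by (intro mult_right_mono) auto
        then show ?thesis by auto
      qed
    qed
  qed (use assms in auto)
  also have "\<dots> \<le> card P" by (rule card_mono) (use assms in auto)
  finally show ?thesis .
qed

lemma density_lessThan_le_defects:
  assumes "finite_nonempty_seq \<Phi>"
  shows "real J * (real (card (\<Phi> N \<inter> {..<T})) / real (card (\<Phi> N)))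
    \<le> 1 + (\<Sum>i<J. foelner_defect \<Phi> (i*T) N)"
proof -
  \<comment> \<open>the translates of \<Phi> N \<inter> {..<T} by i*T, i < J, lie in disjoint blocks and, up to
    the Foelner defects, inside \<Phi> N\<close>
  let ?P = "\<Phi> N"
  let ?D = "\<lambda>i. card ((\<lambda>n. n + i*T) ` ?P - ?P \<union> (?P - (\<lambda>n. n + i*T) ` ?P))"
  have fin: "finite ?P" using assms by (rule finite_nonempty_seq_finite)
  have cP: "real (card ?P) > 0" using finite_nonempty_seq_card_pos[OF assms] by simp
  have "J * card (?P \<inter> {..<T}) = (\<Sum>i<J. card (?P \<inter> {..<T}))" by simp
  also have "\<dots> \<le> (\<Sum>i<J. card (?P \<inter> {i*T..<(i+1)*T}) + ?D i)"
    by (rule sum_mono) (rule card_lessThan_le_block[OF fin])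
  also have "\<dots> \<le> card ?P + (\<Sum>i<J. ?D i)"
    using sum_card_blocks_le[OF fin, where J=J and T=T] by (simp add: sum.distrib)
  finally have "real (J * card (?P \<inter> {..<T})) \<le> real (card ?P + (\<Sum>i<J. ?D i))"
    by (rule of_nat_mono)
  then have "real J * real (card (?P \<inter> {..<T})) \<le> real (card ?P) + (\<Sum>i<J. real (?D i))"
    by simp
  then have "real J * real (card (?P \<inter> {..<T})) / real (card ?P)
      \<le> (real (card ?P) + (\<Sum>i<J. real (?D i))) / real (card ?P)"
    by (rule divide_right_mono) simp
  also have "\<dots> = 1 + (\<Sum>i<J. foelner_defect \<Phi> (i*T) N)"
    using cP unfolding foelner_defect_def by (simp add: add_divide_distrib sum_divide_distrib)
  finally show ?thesis by simp
qed

lemma foelner_density_lessThan_tendsto_0: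
  assumes F: "foelner \<Phi>"
  shows "(\<lambda>N. real (card (\<Phi> N \<inter> {..<T})) / real (card (\<Phi> N))) \<longlonglongrightarrow> 0"
proof (rule order_tendstoI)
  fix a :: real assume "a < 0"
  then show "eventually (\<lambda>N. a < real (card (\<Phi> N \<inter> {..<T})) / real (card (\<Phi> N))) sequentially"
    by (intro always_eventually allI) (auto intro: less_le_trans)
next
  fix a :: real assume a: "0 < a"
  obtain J :: nat where J: "2 / a < real J" using reals_Archimedean2 by blast
  moreover have "0 < 2 / a" using a by simp
  ultimately have Jpos: "real J > 0" by linarith
  have "(\<lambda>N. \<Sum>i<J. foelner_defect \<Phi> (i*T) N) \<longlonglongrightarrow> (\<Sum>i<J. 0)"
    by (intro tendsto_sum foelner_defect_tendsto F)
  then have "eventually (\<lambda>N. (\<Sum>i<J. foelner_defect \<Phi> (i*T) N) < 1) sequentially"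
    using order_tendstoD(2)[of _ 0 sequentially "1::real"] by simp
  then show "eventually (\<lambda>N. real (card (\<Phi> N \<inter> {..<T})) / real (card (\<Phi> N)) < a) sequentially"
  proof (rule eventually_mono)
    fix N assume lt: "(\<Sum>i<J. foelner_defect \<Phi> (i*T) N) < 1"
    let ?x = "real (card (\<Phi> N \<inter> {..<T})) / real (card (\<Phi> N))"
    have "real J * ?x < 2"
      using density_lessThan_le_defects[OF foelner_finite_nonempty[OF F], of J N T] lt by linarith
    then have "?x < 2 / real J" using Jpos by (simp add: pos_less_divide_eq mult.commute)
    also have "2 / real J < a" using J a Jpos by (simp add: pos_divide_less_eq mult.commute)
    finally show "?x < a" .
  qed
qed

section \<open>Fourier sums, Fourier coefficients and Bessel's inequality\<close>

definition fourier_sum :: "nat set \<Rightarrow> (nat \<Rightarrow> complex) \<Rightarrow> (nat \<Rightarrow> real) \<Rightarrow> nat \<Rightarrow> complex" where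
  "fourier_sum S c \<theta> n = (\<Sum>k\<in>S. c k * echar (- \<theta> k) n)"

definition fourier_coef :: "(nat \<Rightarrow> nat set) \<Rightarrow> (nat \<Rightarrow> complex) \<Rightarrow> real \<Rightarrow> nat \<Rightarrow> complex" where
  "fourier_coef \<Psi> f \<theta> N = favg \<Psi> (\<lambda>n. f n * echar \<theta> n) N"

lemma trig_poly_fourier_sum: "finite S \<Longrightarrow> trig_poly (fourier_sum S c t)"
  unfolding fourier_sum_def using trig_poly_echar_sum[of S c "\<lambda>k. - t k"] by simp

lemma cnj_fourier_sum: "cnj (fourier_sum S c \<theta> n) = (\<Sum>k\<in>S. cnj (c k) * echar (\<theta> k) n)"
  unfolding fourier_sum_def by (simp add: cnj_echar)

lemma fourier_sum_mult_cnj: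
  "fourier_sum S c \<theta> n * cnj (fourier_sum S c \<theta> n) = (\<Sum>k\<in>S. \<Sum>l\<in>S. (c k * cnj (c l)) * echar (\<theta> l - \<theta> k) n)"
proof -
  have "fourier_sum S c \<theta> n * cnj (fourier_sum S c \<theta> n) = (\<Sum>k\<in>S. \<Sum>l\<in>S. (c k * echar (- \<theta> k) n) * (cnj (c l) * echar (\<theta> l) n))"
    unfolding cnj_fourier_sum by (simp add: fourier_sum_def sum_product)
  also have "\<dots> = (\<Sum>k\<in>S. \<Sum>l\<in>S. (c k * cnj (c l)) * echar (\<theta> l - \<theta> k) n)"
  proof (intro sum.cong refl)
    fix k l
    have "echar (- \<theta> k) n * echar (\<theta> l) n = echar (\<theta> l - \<theta> k) n" by (simp add: echar_mult)
    then show "(c k * echar (- \<theta> k) n) * (cnj (c l) * echar (\<theta> l) n) = (c k * cnj (c l)) * echar (\<theta> l - \<theta> k) n"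
      by (simp add: mult_ac)
  qed
  finally show ?thesis .
qed

lemma favg_fourier_sum_mult_cnj_tendsto:
  assumes F: "foelner \<Psi>" and S: "finite S" and inj: "inj_on \<theta> S"
    and rng: "\<And>k. k \<in> S \<Longrightarrow> 0 \<le> \<theta> k \<and> \<theta> k < 1"
  shows "(\<lambda>N. favg \<Psi> (\<lambda>n. fourier_sum S c \<theta> n * cnj (fourier_sum S c \<theta> n)) N) \<longlonglongrightarrow> (\<Sum>k\<in>S. of_real ((cmod (c k))\<^sup>2))"
proof -
  have eq: "favg \<Psi> (\<lambda>n. fourier_sum S c \<theta> n * cnj (fourier_sum S c \<theta> n)) N =
      (\<Sum>k\<in>S. \<Sum>l\<in>S. (c k * cnj (c l)) * favg \<Psi> (echar (\<theta> l - \<theta> k)) N)" for N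
    unfolding fourier_sum_mult_cnj favg_sum favg_cmult by simp
  have "(\<lambda>N. \<Sum>k\<in>S. \<Sum>l\<in>S. (c k * cnj (c l)) * favg \<Psi> (echar (\<theta> l - \<theta> k)) N) \<longlonglongrightarrow>
      (\<Sum>k\<in>S. \<Sum>l\<in>S. (c k * cnj (c l)) * (if \<theta> l = \<theta> k then 1 else 0))"
  proof (intro tendsto_sum tendsto_mult tendsto_const)
    fix k l assume "k \<in> S" "l \<in> S"
    then show "(\<lambda>N. favg \<Psi> (echar (\<theta> l - \<theta> k)) N) \<longlonglongrightarrow> (if \<theta> l = \<theta> k then 1 else 0)"
      using favg_echar_diff_tendsto[OF F] rng by blast
  qed
  also have "(\<Sum>k\<in>S. \<Sum>l\<in>S. (c k * cnj (c l)) * (if \<theta> l = \<theta> k then 1 else 0)) =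
      (\<Sum>k\<in>S. \<Sum>l\<in>S. (if l = k then c k * cnj (c l) else 0))"
  proof (intro sum.cong refl)
    fix k l assume "k \<in> S" "l \<in> S"
    then have "(\<theta> l = \<theta> k) = (l = k)" using inj by (auto simp: inj_on_def)
    then show "(c k * cnj (c l)) * (if \<theta> l = \<theta> k then 1 else 0) = (if l = k then c k * cnj (c l) else 0)"
      by simp
  qed
  also have "\<dots> = (\<Sum>k\<in>S. c k * cnj (c k))"
    using S by (simp add: sum.delta)
  also have "\<dots> = (\<Sum>k\<in>S. of_real ((cmod (c k))\<^sup>2))"
    by (intro sum.cong refl) (rule complex_norm_square[symmetric])
  finally show ?thesis unfolding eq .
qed

lemma favg_fourier_sum_sq_norm_tendsto:
  assumes F: "foelner \<Psi>" and S: "finite S" and inj: "inj_on \<theta> S"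
    and rng: "\<And>k. k \<in> S \<Longrightarrow> 0 \<le> \<theta> k \<and> \<theta> k < 1"
  shows "(\<lambda>N. favg \<Psi> (\<lambda>n. (cmod (fourier_sum S c \<theta> n))\<^sup>2) N) \<longlonglongrightarrow> (\<Sum>k\<in>S. (cmod (c k))\<^sup>2)"
proof -
  have "(\<lambda>N. Re (favg \<Psi> (\<lambda>n. fourier_sum S c \<theta> n * cnj (fourier_sum S c \<theta> n)) N)) \<longlonglongrightarrow> Re (\<Sum>k\<in>S. of_real ((cmod (c k))\<^sup>2))"
    by (intro tendsto_Re favg_fourier_sum_mult_cnj_tendsto[OF assms])
  then show ?thesis by (simp add: favg_sq_norm_eq_Re)
qed

lemma fourier_coef_comp: "fourier_coef (\<Phi> \<circ> \<sigma>) f \<theta> = fourier_coef \<Phi> f \<theta> \<circ> \<sigma>"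
  by (simp add: fun_eq_iff fourier_coef_def favg_comp)

lemma fourier_coef_diff: "fourier_coef \<Psi> (\<lambda>n. a n - b n) \<theta> N = fourier_coef \<Psi> a \<theta> N - fourier_coef \<Psi> b \<theta> N"
  unfolding fourier_coef_def by (simp add: favg_diff algebra_simps)

lemma fourier_coef_add: "fourier_coef \<Psi> (\<lambda>n. a n + b n) \<theta> N = fourier_coef \<Psi> a \<theta> N + fourier_coef \<Psi> b \<theta> N"
  unfolding fourier_coef_def by (simp add: favg_add algebra_simps)

lemma fourier_coef_fourier_sum:
  "fourier_coef \<Psi> (fourier_sum S c t) \<theta> N = (\<Sum>k\<in>S. c k * favg \<Psi> (echar (\<theta> - t k)) N)"
proof -
  have "fourier_sum S c t n * echar \<theta> n = (\<Sum>k\<in>S. c k * echar (\<theta> - t k) n)" for n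
    unfolding fourier_sum_def sum_distrib_right by (simp add: mult.assoc echar_mult)
  then show ?thesis unfolding fourier_coef_def by (simp add: favg_sum favg_cmult)
qed

lemma norm_fourier_coef_power2_le:
  "(cmod (fourier_coef \<Psi> f \<theta> N))\<^sup>2 \<le> favg \<Psi> (\<lambda>n. (cmod (f n))\<^sup>2) N"
proof -
  have "fourier_coef \<Psi> f \<theta> N = favg \<Psi> (\<lambda>n. f n * cnj (echar (-\<theta>) n)) N"
    unfolding fourier_coef_def by (simp add: cnj_echar)
  then have "(cmod (fourier_coef \<Psi> f \<theta> N))\<^sup>2
      \<le> favg \<Psi> (\<lambda>n. (cmod (f n))\<^sup>2) N * favg \<Psi> (\<lambda>n. (cmod (echar (-\<theta>) n))\<^sup>2) N"
    using norm_favg_mult_cnj_power2_le[of \<Psi> f "echar (-\<theta>)" N] by simp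
  also have "\<dots> \<le> favg \<Psi> (\<lambda>n. (cmod (f n))\<^sup>2) N * 1"
    by (intro mult_left_mono favg_le_const favg_sq_norm_nonneg) simp_all
  finally show ?thesis by simp
qed

lemma favg_mult_cnj_fourier_sum_tendsto:
  assumes lim: "\<And>k. k \<in> S \<Longrightarrow> fourier_coef \<Psi> f (\<theta> k) \<longlonglongrightarrow> c k"
  shows "(\<lambda>N. favg \<Psi> (\<lambda>n. f n * cnj (fourier_sum S c \<theta> n)) N) \<longlonglongrightarrow> (\<Sum>k\<in>S. of_real ((cmod (c k))\<^sup>2))"
proof -
  have "favg \<Psi> (\<lambda>n. f n * cnj (fourier_sum S c \<theta> n)) N = (\<Sum>k\<in>S. cnj (c k) * fourier_coef \<Psi> f (\<theta> k) N)" for N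
    unfolding cnj_fourier_sum fourier_coef_def sum_distrib_left
    by (simp add: favg_sum mult_ac flip: favg_cmult)
  moreover have "(\<lambda>N. \<Sum>k\<in>S. cnj (c k) * fourier_coef \<Psi> f (\<theta> k) N) \<longlonglongrightarrow> (\<Sum>k\<in>S. cnj (c k) * c k)"
    by (intro tendsto_sum tendsto_mult tendsto_const lim)
  moreover have "cnj (c k) * c k = of_real ((cmod (c k))\<^sup>2)" for k
    by (simp add: complex_mult_cnj cmod_power2 mult.commute)
  ultimately show ?thesis by simp
qed

lemma norm_diff_power2_eq: "(cmod (x - y))\<^sup>2 = (cmod x)\<^sup>2 + (cmod y)\<^sup>2 - 2 * Re (x * cnj y)"
  unfolding cmod_power2 by (simp add: power2_eq_square algebra_simps)

lemma bessel_inequality: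
  fixes S :: "nat set"
  assumes F: "foelner \<Psi>" and S: "finite S" and inj: "inj_on \<theta> S"
    and rng: "\<And>k. k \<in> S \<Longrightarrow> 0 \<le> \<theta> k \<and> \<theta> k < 1"
    and lim: "\<And>k. k \<in> S \<Longrightarrow> fourier_coef \<Psi> f (\<theta> k) \<longlonglongrightarrow> c k"
    and B: "\<And>N. favg \<Psi> (\<lambda>n. (cmod (f n))\<^sup>2) N \<le> B"
  shows "(\<Sum>k\<in>S. (cmod (c k))\<^sup>2) \<le> B"
proof -
  let ?P = "fourier_sum S c \<theta>"
  let ?s = "\<Sum>k\<in>S. (cmod (c k))\<^sup>2"
  have eq: "favg \<Psi> (\<lambda>n. (cmod (f n))\<^sup>2) N - favg \<Psi> (\<lambda>n. (cmod (f n - ?P n))\<^sup>2) N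
      = 2 * Re (favg \<Psi> (\<lambda>n. f n * cnj (?P n)) N) - favg \<Psi> (\<lambda>n. (cmod (?P n))\<^sup>2) N" for N
    unfolding norm_diff_power2_eq by (simp add: favg_add favg_diff favg_cmult favg_Re)
  have "(\<lambda>N. 2 * Re (favg \<Psi> (\<lambda>n. f n * cnj (?P n)) N) - favg \<Psi> (\<lambda>n. (cmod (?P n))\<^sup>2) N)
      \<longlonglongrightarrow> 2 * Re (\<Sum>k\<in>S. of_real ((cmod (c k))\<^sup>2)) - ?s"
    by (intro tendsto_intros favg_mult_cnj_fourier_sum_tendsto lim
        favg_fourier_sum_sq_norm_tendsto[OF F S inj rng])
  then have lim2: "(\<lambda>N. favg \<Psi> (\<lambda>n. (cmod (f n))\<^sup>2) N - favg \<Psi> (\<lambda>n. (cmod (f n - ?P n))\<^sup>2) N)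
      \<longlonglongrightarrow> ?s"
    unfolding eq by (simp flip: of_real_sum)
  have "favg \<Psi> (\<lambda>n. (cmod (f n))\<^sup>2) N - favg \<Psi> (\<lambda>n. (cmod (f n - ?P n))\<^sup>2) N \<le> B" for N
    using B[of N] favg_sq_norm_nonneg[of \<Psi> "\<lambda>n. f n - ?P n" N] by linarith
  then show ?thesis by (intro LIMSEQ_le_const2[OF lim2]) simp
qed

section \<open>Diagonal extraction of the spectrum\<close>

lemma frequently_sequentially_subseq:
  "frequently P sequentially \<Longrightarrow> \<exists>r::nat\<Rightarrow>nat. strict_mono r \<and> (\<forall>n. P (r n))"
proof -
  assume "frequently P sequentially"
  then have "infinite {x. P x}"
    unfolding cofinite_eq_sequentially[symmetric] frequently_cofinite by simp
  from infinite_enumerate[OF this] show ?thesis by auto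
qed

locale nested_subseqs =
  fixes s r :: "nat \<Rightarrow> nat \<Rightarrow> nat"
  assumes strict_mono_first: "strict_mono (s 0)"
    and strict_mono_step: "strict_mono (r k)"
    and subseq_Suc: "s (Suc k) = s k \<circ> r k"
begin

lemma strict_mono_subseq: "strict_mono (s k)"
proof (induction k)
  case (Suc k)
  then show ?case unfolding subseq_Suc by (rule strict_mono_o[OF _ strict_mono_step])
qed (rule strict_mono_first)

lemma subseq_add: "\<exists>R. strict_mono R \<and> s (k + d) = s k \<circ> R"
proof (induction d)
  case 0
  then show ?case by (intro exI[of _ id]) (simp add: strict_mono_def)
next
  case (Suc d)
  then obtain R where "strict_mono R" "s (k + d) = s k \<circ> R" by blast
  then have "strict_mono (R \<circ> r (k + d))" "s (k + Suc d) = s k \<circ> (R \<circ> r (k + d))"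
    by (simp_all add: strict_mono_o[OF _ strict_mono_step] subseq_Suc o_assoc)
  then show ?case by blast
qed

lemma diagonal_tail:
  obtains m where "filterlim m sequentially sequentially" "\<And>N. k \<le> N \<Longrightarrow> s N N = s k (m N)"
proof -
  have "\<exists>j. k \<le> N \<longrightarrow> s N N = s k j \<and> N \<le> j" for N
  proof (cases "k \<le> N")
    case True
    obtain R where R: "strict_mono R" "s (k + (N - k)) = s k \<circ> R" using subseq_add by blast
    then show ?thesis using True seq_suble[OF R(1), of N] by (intro exI[of _ "R N"]) simp
  qed simp
  then obtain m where m: "\<And>N. k \<le> N \<Longrightarrow> s N N = s k (m N) \<and> N \<le> m N" by metis
  have "filterlim m sequentially sequentially"
    by (rule filterlim_at_top_mono[OF filterlim_ident])
       (use m in \<open>auto simp: eventually_sequentially\<close>)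
  then show ?thesis using that m by blast
qed

lemma strict_mono_diagonal: "strict_mono (\<lambda>N. s N N)"
  unfolding strict_mono_Suc_iff
proof
  fix N
  have "N < r N (Suc N)" using seq_suble[OF strict_mono_step[of N], of "Suc N"] by simp
  then show "s N N < s (Suc N) (Suc N)" using strict_mono_subseq unfolding subseq_Suc
    by (simp add: strict_mono_def)
qed

lemma diagonal_tendsto:
  assumes "(\<lambda>j. X (s k j)) \<longlonglongrightarrow> l"
  shows "(\<lambda>N. X (s N N)) \<longlonglongrightarrow> l"
proof -
  obtain m where m: "filterlim m sequentially sequentially" "\<And>N. k \<le> N \<Longrightarrow> s N N = s k (m N)"
    using diagonal_tail[where k=k] by metis
  have "eventually (\<lambda>N. X (s k (m N)) = X (s N N)) sequentially"
    using m(2) unfolding eventually_sequentially by metis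
  with filterlim_compose[OF assms m(1)] show ?thesis by (rule Lim_transform_eventually)
qed

lemma diagonal_frequently:
  assumes "frequently (\<lambda>N. Q (s N N)) sequentially"
  shows "frequently (\<lambda>j. Q (s k j)) sequentially"
proof (rule ccontr)
  obtain m where m: "filterlim m sequentially sequentially" "\<And>N. k \<le> N \<Longrightarrow> s N N = s k (m N)"
    using diagonal_tail[where k=k] by metis
  assume "\<not> frequently (\<lambda>j. Q (s k j)) sequentially"
  then have "eventually (\<lambda>j. \<not> Q (s k j)) sequentially" by (simp add: frequently_def)
  from eventually_compose_filterlim[OF this m(1)]
  have "eventually (\<lambda>N. \<not> Q (s N N)) sequentially"
    using eventually_ge_at_top[of k] by eventually_elim (use m(2) in auto)
  then show False using assms by (simp add: frequently_def)
qed

end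

text \<open>
  In the application, a \<theta> N is the Fourier coefficient of f at frequency \<theta> on the N-th
  averaging set; Bessel's inequality is all the diagonal argument needs to know about it.
\<close>

locale bessel_family =
  fixes a :: "real \<Rightarrow> nat \<Rightarrow> complex" and C B :: real
  assumes bounded: "\<And>\<theta> N. cmod (a \<theta> N) \<le> C"
    and bessel: "\<And>\<sigma> (K::nat) t c. strict_mono \<sigma> \<Longrightarrow> inj_on t {..<K} \<Longrightarrow>
      (\<And>k. k < K \<Longrightarrow> t k \<in> {0..<1} \<and> (a (t k) \<circ> \<sigma>) \<longlonglongrightarrow> c k) \<Longrightarrow> (\<Sum>k<K. (cmod (c k))\<^sup>2) \<le> B"
begin

definition refine_step :: "(nat \<Rightarrow> nat) \<Rightarrow> real set \<Rightarrow> real \<Rightarrow> (nat \<Rightarrow> nat) \<Rightarrow> complex \<Rightarrow> bool" where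
  "refine_step \<sigma> T \<theta>' r c' \<longleftrightarrow> \<theta>' \<in> {0..<1} - T \<and> strict_mono r \<and> (a \<theta>' \<circ> (\<sigma> \<circ> r)) \<longlonglongrightarrow> c' \<and>
     (\<forall>\<theta>\<in>{0..<1} - T. \<forall>\<eta>. frequently (\<lambda>N. \<eta> \<le> cmod (a \<theta> (\<sigma> N))) sequentially \<longrightarrow> \<eta> \<le> 2 * cmod c')"

lemma exists_nearly_largest_frequency:
  assumes "finite T"
  obtains \<theta>\<^sub>1 \<eta>\<^sub>0 where "\<theta>\<^sub>1 \<in> {0..<1} - T" "frequently (\<lambda>N. \<eta>\<^sub>0 \<le> cmod (a \<theta>\<^sub>1 (\<sigma> N))) sequentially"
    "\<And>\<theta> \<eta>. \<theta> \<in> {0..<1} - T \<Longrightarrow> frequently (\<lambda>N. \<eta> \<le> cmod (a \<theta> (\<sigma> N))) sequentially \<Longrightarrow> \<eta> \<le> 2 * \<eta>\<^sub>0"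
proof -
  define V where "V = {\<eta>. 0 \<le> \<eta> \<and> (\<exists>\<theta>\<in>{0..<1} - T. frequently (\<lambda>N. \<eta> \<le> cmod (a \<theta> (\<sigma> N))) sequentially)}"
  have "infinite ({0..<1::real} - T)" using assms by (intro Diff_infinite_finite) simp_all
  then obtain \<theta>\<^sub>0 where "\<theta>\<^sub>0 \<in> {0..<1::real} - T" using infinite_imp_nonempty by blast
  then have V0: "0 \<in> V" unfolding V_def by (auto intro: eventually_frequently)
  have "\<eta> \<le> C" if \<eta>: "\<eta> \<in> V" for \<eta>
  proof -
    obtain \<theta> where "frequently (\<lambda>N. \<eta> \<le> cmod (a \<theta> (\<sigma> N))) sequentially"
      using \<eta> unfolding V_def by blast
    then obtain N where "\<eta> \<le> cmod (a \<theta> (\<sigma> N))" by (auto dest: frequently_ex)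
    then show ?thesis using bounded[of \<theta> "\<sigma> N"] by linarith
  qed
  then have bdd: "bdd_above V" unfolding bdd_above_def by blast
  obtain \<eta>\<^sub>0 where \<eta>\<^sub>0: "\<eta>\<^sub>0 \<in> V" "Sup V \<le> 2 * \<eta>\<^sub>0"
  proof (cases "Sup V = 0")
    case False
    then have "Sup V / 2 < Sup V" using cSup_upper[OF V0 bdd] by simp
    then obtain \<eta> where "\<eta> \<in> V" "Sup V / 2 < \<eta>"
      using less_cSup_iff[OF _ bdd, of "Sup V / 2"] V0 by blast
    then show ?thesis using that[of \<eta>] by simp
  qed (use that V0 in simp)
  then obtain \<theta>\<^sub>1 where "\<theta>\<^sub>1 \<in> {0..<1} - T" "frequently (\<lambda>N. \<eta>\<^sub>0 \<le> cmod (a \<theta>\<^sub>1 (\<sigma> N))) sequentially"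
    unfolding V_def by blast
  moreover have "\<eta> \<le> 2 * \<eta>\<^sub>0"
    if "\<theta> \<in> {0..<1} - T" "frequently (\<lambda>N. \<eta> \<le> cmod (a \<theta> (\<sigma> N))) sequentially" for \<theta> \<eta>
  proof (cases "0 \<le> \<eta>")
    case True
    then have "\<eta> \<in> V" using that unfolding V_def by blast
    then show ?thesis using cSup_upper[OF _ bdd] \<eta>\<^sub>0(2) by fastforce
  qed (use \<eta>\<^sub>0 V_def in auto)
  ultimately show ?thesis using that by blast
qed

lemma refine_step_exists:
  assumes "finite T"
  shows "\<exists>x. refine_step \<sigma> T (fst x) (fst (snd x)) (snd (snd x))"
proof -
  obtain \<theta>\<^sub>1 \<eta>\<^sub>0 where \<theta>\<^sub>1: "\<theta>\<^sub>1 \<in> {0..<1} - T" "frequently (\<lambda>N. \<eta>\<^sub>0 \<le> cmod (a \<theta>\<^sub>1 (\<sigma> N))) sequentially"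
    and largest: "\<And>\<theta> \<eta>. \<theta> \<in> {0..<1} - T \<Longrightarrow> frequently (\<lambda>N. \<eta> \<le> cmod (a \<theta> (\<sigma> N))) sequentially \<Longrightarrow> \<eta> \<le> 2 * \<eta>\<^sub>0"
    using exists_nearly_largest_frequency[OF assms] by metis
  obtain r\<^sub>1 :: "nat \<Rightarrow> nat" where r\<^sub>1: "strict_mono r\<^sub>1" "\<And>N. \<eta>\<^sub>0 \<le> cmod (a \<theta>\<^sub>1 (\<sigma> (r\<^sub>1 N)))"
    using frequently_sequentially_subseq[OF \<theta>\<^sub>1(2)] by blast
  have "bounded (range (\<lambda>N. a \<theta>\<^sub>1 (\<sigma> (r\<^sub>1 N))))"
    unfolding bounded_iff using bounded by blast
  then obtain c' r\<^sub>2 where r\<^sub>2: "strict_mono r\<^sub>2" and lim: "((\<lambda>N. a \<theta>\<^sub>1 (\<sigma> (r\<^sub>1 N))) \<circ> r\<^sub>2) \<longlonglongrightarrow> c'"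
    using bounded_imp_convergent_subsequence by blast
  have "\<eta>\<^sub>0 \<le> cmod c'"
    by (rule LIMSEQ_le_const[OF tendsto_norm[OF lim]]) (use r\<^sub>1 in auto)
  then have "\<forall>\<theta>\<in>{0..<1} - T. \<forall>\<eta>. frequently (\<lambda>N. \<eta> \<le> cmod (a \<theta> (\<sigma> N))) sequentially \<longrightarrow> \<eta> \<le> 2 * cmod c'"
    using largest by fastforce
  moreover have "(a \<theta>\<^sub>1 \<circ> (\<sigma> \<circ> (r\<^sub>1 \<circ> r\<^sub>2))) \<longlonglongrightarrow> c'" using lim by (simp add: comp_def)
  ultimately have "refine_step \<sigma> T \<theta>\<^sub>1 (r\<^sub>1 \<circ> r\<^sub>2) c'"
    unfolding refine_step_def using \<theta>\<^sub>1(1) strict_mono_o[OF r\<^sub>1(1) r\<^sub>2] by blast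
  then show ?thesis by (intro exI[of _ "(\<theta>\<^sub>1, r\<^sub>1 \<circ> r\<^sub>2, c')"]) simp
qed

definition refine_choice :: "(nat \<Rightarrow> nat) \<Rightarrow> real set \<Rightarrow> real \<times> (nat \<Rightarrow> nat) \<times> complex" where
  "refine_choice \<sigma> T = (SOME x. refine_step \<sigma> T (fst x) (fst (snd x)) (snd (snd x)))"

text \<open>Stage k is the current subsequence together with the k frequencies fixed so far.\<close>

primrec stage :: "nat \<Rightarrow> (nat \<Rightarrow> nat) \<times> real set" where
  "stage 0 = (id, {})"
| "stage (Suc k) = (fst (stage k) \<circ> fst (snd (refine_choice (fst (stage k)) (snd (stage k)))),
       insert (fst (refine_choice (fst (stage k)) (snd (stage k)))) (snd (stage k)))"

definition "stage_subseq k = fst (stage k)"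
definition "stage_freqs k = snd (stage k)"
definition "stage_freq k = fst (refine_choice (stage_subseq k) (stage_freqs k))"
definition "stage_refinement k = fst (snd (refine_choice (stage_subseq k) (stage_freqs k)))"
definition "stage_coef k = snd (snd (refine_choice (stage_subseq k) (stage_freqs k)))"
definition "diag_subseq N = stage_subseq N N"

lemma stage_subseq_Suc: "stage_subseq (Suc k) = stage_subseq k \<circ> stage_refinement k"
  by (simp add: stage_subseq_def stage_refinement_def stage_freqs_def)

lemma stage_freqs_eq: "stage_freqs k = stage_freq ` {..<k}"
  by (induction k) (simp_all add: stage_freqs_def stage_freq_def stage_subseq_def lessThan_Suc)

lemma refine_step_stage:
  "refine_step (stage_subseq k) (stage_freqs k) (stage_freq k) (stage_refinement k) (stage_coef k)"
  unfolding stage_freq_def stage_refinement_def stage_coef_def refine_choice_def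
  by (rule someI_ex, rule refine_step_exists) (simp add: stage_freqs_eq)

lemma nested_stages: "nested_subseqs stage_subseq stage_refinement"
proof
  show "strict_mono (stage_subseq 0)" by (simp add: stage_subseq_def strict_mono_def)
  show "strict_mono (stage_refinement k)" for k
    using refine_step_stage[of k] by (simp add: refine_step_def)
qed (rule stage_subseq_Suc)

lemma strict_mono_diag_subseq: "strict_mono diag_subseq"
  using nested_subseqs.strict_mono_diagonal[OF nested_stages] by (simp add: diag_subseq_def[abs_def])

lemma stage_freq_range: "stage_freq k \<in> {0..<1}"
  using refine_step_stage[of k] by (simp add: refine_step_def)

lemma inj_stage_freq: "inj stage_freq"
proof (rule inj_onI, rule ccontr)
  have new: "stage_freq j \<notin> stage_freq ` {..<j}" for j
    using refine_step_stage[of j] by (simp add: refine_step_def stage_freqs_eq)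
  fix i j assume "stage_freq i = stage_freq j" "i \<noteq> j"
  then show False using new[of i] new[of j] by (metis image_eqI lessThan_iff linorder_neqE_nat)
qed

lemma diag_subseq_tendsto_stage_coef: "(a (stage_freq k) \<circ> diag_subseq) \<longlonglongrightarrow> stage_coef k"
proof -
  have "(\<lambda>j. a (stage_freq k) (stage_subseq (Suc k) j)) \<longlonglongrightarrow> stage_coef k"
    using refine_step_stage[of k] by (simp add: refine_step_def stage_subseq_Suc comp_def)
  from nested_subseqs.diagonal_tendsto[OF nested_stages this]
  show ?thesis by (simp add: diag_subseq_def comp_def)
qed

lemma sum_stage_coef_le: "(\<Sum>k<K. (cmod (stage_coef k))\<^sup>2) \<le> B"
  by (rule bessel[OF strict_mono_diag_subseq])
     (use inj_stage_freq stage_freq_range diag_subseq_tendsto_stage_coef in \<open>auto simp: inj_on_def\<close>)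

lemma stage_coef_lower_bound:
  assumes "\<theta> \<in> {0..<1} - range stage_freq" "frequently (\<lambda>N. \<eta> \<le> cmod (a \<theta> (diag_subseq N))) sequentially"
  shows "\<eta> \<le> 2 * cmod (stage_coef k)"
proof -
  have "frequently (\<lambda>j. \<eta> \<le> cmod (a \<theta> (stage_subseq k j))) sequentially"
    using nested_subseqs.diagonal_frequently[OF nested_stages] assms(2) by (simp add: diag_subseq_def)
  moreover have "\<theta> \<in> {0..<1} - stage_freqs k" using assms(1) by (auto simp: stage_freqs_eq)
  ultimately show ?thesis using refine_step_stage[of k] unfolding refine_step_def by blast
qed

lemma diag_subseq_tendsto_0:
  assumes \<theta>: "\<theta> \<in> {0..<1} - range stage_freq"
  shows "(a \<theta> \<circ> diag_subseq) \<longlonglongrightarrow> 0"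
proof (rule ccontr)
  assume "\<not> (a \<theta> \<circ> diag_subseq) \<longlonglongrightarrow> 0"
  then obtain \<eta> where \<eta>: "\<eta> > 0" "frequently (\<lambda>N. \<eta> \<le> cmod (a \<theta> (diag_subseq N))) sequentially"
    unfolding LIMSEQ_def frequently_sequentially by (auto simp: not_less)
  obtain K :: nat where K: "B / (\<eta> / 2)\<^sup>2 < real K" using reals_Archimedean2 by blast
  have "(\<eta> / 2)\<^sup>2 \<le> (cmod (stage_coef k))\<^sup>2" for k
    using stage_coef_lower_bound[OF \<theta> \<eta>(2), of k] \<eta>(1) by (intro power_mono) simp_all
  then have "real K * (\<eta> / 2)\<^sup>2 \<le> B"
    using sum_mono[of "{..<K}"] sum_stage_coef_le[of K] by (smt (verit) card_lessThan sum_constant)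
  then show False using K \<eta>(1) by (simp add: field_simps)
qed

theorem diagonal_extraction:
  "\<exists>(\<sigma>::nat\<Rightarrow>nat) (t::nat\<Rightarrow>real) (c::nat\<Rightarrow>complex). strict_mono \<sigma> \<and> inj t \<and> range t \<subseteq> {0..<1} \<and>
     (\<forall>k. (a (t k) \<circ> \<sigma>) \<longlonglongrightarrow> c k) \<and> (\<forall>\<theta>\<in>{0..<1} - range t. (a \<theta> \<circ> \<sigma>) \<longlonglongrightarrow> 0) \<and>
     summable (\<lambda>k. (cmod (c k))\<^sup>2)"
proof -
  have "summable (\<lambda>k. (cmod (stage_coef k))\<^sup>2)"
    by (rule summableI_nonneg_bounded[of _ B]) (simp_all add: sum_stage_coef_le)
  then show ?thesis
    using strict_mono_diag_subseq inj_stage_freq stage_freq_range diag_subseq_tendsto_stage_coef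
      diag_subseq_tendsto_0 by blast
qed

end

lemma fourier_coef_bessel_family:
  assumes F: "foelner \<Phi>" and B: "\<And>N. favg \<Phi> (\<lambda>n. (cmod (f n))\<^sup>2) N \<le> B"
  shows "bessel_family (fourier_coef \<Phi> f) (sqrt B) B"
proof
  show "cmod (fourier_coef \<Phi> f \<theta> N) \<le> sqrt B" for \<theta> N
    using norm_fourier_coef_power2_le[of \<Phi> f \<theta> N] B[of N]
    by (intro real_le_rsqrt) simp
next
  fix \<sigma> :: "nat \<Rightarrow> nat" and K :: nat and t c
  assume \<sigma>: "strict_mono \<sigma>" and inj: "inj_on t {..<K}"
    and lim: "\<And>k. k < K \<Longrightarrow> t k \<in> {0..<1} \<and> (fourier_coef \<Phi> f (t k) \<circ> \<sigma>) \<longlonglongrightarrow> c k"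
  show "(\<Sum>k<K. (cmod (c k))\<^sup>2) \<le> B"
  proof (rule bessel_inequality[OF foelner_comp[OF F \<sigma>] finite_lessThan inj])
    show "0 \<le> t k \<and> t k < 1" "fourier_coef (\<Phi> \<circ> \<sigma>) f (t k) \<longlonglongrightarrow> c k" if "k \<in> {..<K}" for k
      using lim that by (auto simp: fourier_coef_comp)
  qed (simp add: favg_comp B)
qed

lemma spectral_extraction:
  assumes "foelner \<Phi>" and "\<And>N. favg \<Phi> (\<lambda>n. (cmod (f n))\<^sup>2) N \<le> B"
  obtains \<sigma> :: "nat \<Rightarrow> nat" and t :: "nat \<Rightarrow> real" and c :: "nat \<Rightarrow> complex"
  where "strict_mono \<sigma>" "inj t" "range t \<subseteq> {0..<1}" "\<And>k. fourier_coef (\<Phi> \<circ> \<sigma>) f (t k) \<longlonglongrightarrow> c k"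
    "\<And>\<theta>. \<theta> \<in> {0..<1} - range t \<Longrightarrow> fourier_coef (\<Phi> \<circ> \<sigma>) f \<theta> \<longlonglongrightarrow> 0"
    "summable (\<lambda>k. (cmod (c k))\<^sup>2)"
  using bessel_family.diagonal_extraction[OF fourier_coef_bessel_family[OF assms]]
  by (metis fourier_coef_comp)

section \<open>Gluing the partial Fourier sums\<close>

lemma fourier_sum_diff_lessThan:
  assumes "K \<le> j"
  shows "fourier_sum {..<j} c t n - fourier_sum {..<K} c t n = fourier_sum {K..<j} c t n"
proof -
  have "{..<j} = {..<K} \<union> {K..<j}" using assms by auto
  then have "fourier_sum {..<j} c t n = fourier_sum ({..<K} \<union> {K..<j}) c t n" by simp
  also have "\<dots> = fourier_sum {..<K} c t n + fourier_sum {K..<j} c t n"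
    unfolding fourier_sum_def by (rule sum.union_disjoint) auto
  finally show ?thesis by simp
qed

lemma norm_fourier_sum_le:
  assumes "i \<le> j"
  shows "cmod (fourier_sum {..<i} c t n) \<le> (\<Sum>k<j. cmod (c k))"
proof -
  have "cmod (fourier_sum {..<i} c t n) \<le> (\<Sum>k<i. cmod (c k))"
    unfolding fourier_sum_def using norm_sum[of "\<lambda>k. c k * echar (- t k) n"] by (simp add: norm_mult)
  also have "\<dots> \<le> (\<Sum>k<j. cmod (c k))" using assms by (intro sum_mono2) auto
  finally show ?thesis .
qed

definition tail_sqsum :: "(nat \<Rightarrow> complex) \<Rightarrow> nat \<Rightarrow> real" where
  "tail_sqsum c K = (\<Sum>k. (cmod (c (k + K)))\<^sup>2)"

lemma sum_sq_norm_le_tail_sqsum: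
  assumes "summable (\<lambda>k. (cmod (c k))\<^sup>2)"
  shows "(\<Sum>k\<in>{K..<j}. (cmod (c k))\<^sup>2) \<le> tail_sqsum c K"
proof -
  have sm: "summable (\<lambda>k. (cmod (c (k + K)))\<^sup>2)"
    using summable_iff_shift[of "\<lambda>k. (cmod (c k))\<^sup>2" K] assms by simp
  have "(\<Sum>k\<in>{K..<j}. (cmod (c k))\<^sup>2) = (\<Sum>k\<in>{0..<j-K}. (cmod (c (k + K)))\<^sup>2)"
    using sum.shift_bounds_nat_ivl[of "\<lambda>k. (cmod (c k))\<^sup>2" 0 K "j - K"] by (cases "K \<le> j") simp_all
  also have "\<dots> \<le> tail_sqsum c K"
    unfolding tail_sqsum_def by (rule sum_le_suminf) (use sm in simp_all)
  finally show ?thesis .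
qed

lemma eventually_tail_sqsum_small:
  assumes "summable (\<lambda>k. (cmod (c k))\<^sup>2)" "0 < e"
  shows "eventually (\<lambda>K. tail_sqsum c K + 2 / real (K+1) < e) sequentially"
proof -
  have "tail_sqsum c = (\<lambda>K. (\<Sum>k. (cmod (c k))\<^sup>2) - (\<Sum>k<K. (cmod (c k))\<^sup>2))"
    using suminf_minus_initial_segment[OF assms(1)] by (simp add: fun_eq_iff tail_sqsum_def)
  then have "tail_sqsum c \<longlonglongrightarrow> 0"
    using tendsto_diff[OF tendsto_const[of "\<Sum>k. (cmod (c k))\<^sup>2"] summable_LIMSEQ[OF assms(1)]] by simp
  moreover have "(\<lambda>K. 2 * inverse (real (Suc K))) \<longlonglongrightarrow> 0"
    using tendsto_mult_right_zero[OF LIMSEQ_inverse_real_of_nat] .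
  ultimately have "(\<lambda>K. tail_sqsum c K + 2 / real (K+1)) \<longlonglongrightarrow> 0"
    using tendsto_add by (force simp: divide_inverse)
  then show ?thesis using assms(2) by (rule order_tendstoD)
qed

locale spectral_data =
  fixes \<Psi> :: "nat \<Rightarrow> nat set" and c :: "nat \<Rightarrow> complex" and t :: "nat \<Rightarrow> real"
  assumes foelner: "foelner \<Psi>" and inj_freq: "inj t" and freq_range: "range t \<subseteq> {0..<1}"
    and square_summable: "summable (\<lambda>k. (cmod (c k))\<^sup>2)"
begin

lemma finite_nonempty: "finite_nonempty_seq \<Psi>"
  using foelner by (rule foelner_finite_nonempty)

lemma freq_bounds: "0 \<le> t k" "t k < 1"
  using freq_range[unfolded image_subset_iff] by simp_all

lemma favg_fourier_sum_diff_tendsto: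
  assumes "K \<le> j"
  shows "(\<lambda>N. favg \<Psi> (\<lambda>n. (cmod (fourier_sum {..<j} c t n - fourier_sum {..<K} c t n))\<^sup>2) N)
    \<longlonglongrightarrow> (\<Sum>k\<in>{K..<j}. (cmod (c k))\<^sup>2)"
proof -
  have "(\<lambda>N. favg \<Psi> (\<lambda>n. (cmod (fourier_sum {K..<j} c t n))\<^sup>2) N) \<longlonglongrightarrow> (\<Sum>k\<in>{K..<j}. (cmod (c k))\<^sup>2)"
    by (rule favg_fourier_sum_sq_norm_tendsto[OF foelner])
       (use inj_freq freq_bounds in \<open>auto simp: inj_on_def\<close>)
  then show ?thesis using fourier_sum_diff_lessThan[OF assms] by simp
qed

definition glue_bound :: "nat \<Rightarrow> real" where
  "glue_bound j = (2 * (\<Sum>k<j. cmod (c k)))\<^sup>2"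

text \<open>
  An averaging set \<Psi> N is good at stage j for the threshold T if on average over it the
  j-th partial sum is close to every earlier one, and if its points below T are too few to
  change such an average by more than 1/(j+1), whatever values bounded by glue_bound j sit
  there.
\<close>

definition good_time :: "nat \<Rightarrow> nat \<Rightarrow> nat \<Rightarrow> bool" where
  "good_time j T N \<longleftrightarrow>
     (\<forall>K\<le>j. favg \<Psi> (\<lambda>n. (cmod (fourier_sum {..<j} c t n - fourier_sum {..<K} c t n))\<^sup>2) N
        \<le> tail_sqsum c K + 1 / real (j+1)) \<and>
     real (card (\<Psi> N \<inter> {..<T})) * glue_bound j \<le> real (card (\<Psi> N)) / real (j+1)"

lemma eventually_good_time: "eventually (\<lambda>N. good_time j T N) sequentially"
proof -
  have jp: "0 < 1 / real (j+1)" by simp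
  have "eventually (\<lambda>N. favg \<Psi> (\<lambda>n. (cmod (fourier_sum {..<j} c t n - fourier_sum {..<K} c t n))\<^sup>2) N
      \<le> tail_sqsum c K + 1 / real (j+1)) sequentially" if "K \<le> j" for K
  proof -
    have "(\<Sum>k\<in>{K..<j}. (cmod (c k))\<^sup>2) < tail_sqsum c K + 1 / real (j+1)"
      using sum_sq_norm_le_tail_sqsum[OF square_summable, of K j] jp by linarith
    from order_tendstoD(2)[OF favg_fourier_sum_diff_tendsto[OF that] this]
    show ?thesis by (rule eventually_mono) simp
  qed
  then have e1: "eventually (\<lambda>N. \<forall>K\<in>{..j}. favg \<Psi> (\<lambda>n. (cmod (fourier_sum {..<j} c t n
      - fourier_sum {..<K} c t n))\<^sup>2) N \<le> tail_sqsum c K + 1 / real (j+1)) sequentially"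
    by (intro eventually_ball_finite) auto
  have "(\<lambda>N. real (card (\<Psi> N \<inter> {..<T})) / real (card (\<Psi> N)) * glue_bound j) \<longlonglongrightarrow> 0 * glue_bound j"
    by (intro tendsto_mult foelner_density_lessThan_tendsto_0[OF foelner] tendsto_const)
  from order_tendstoD(2)[OF this[simplified] jp]
  have e2: "eventually (\<lambda>N. real (card (\<Psi> N \<inter> {..<T})) * glue_bound j
      \<le> real (card (\<Psi> N)) / real (j+1)) sequentially"
    using finite_nonempty_seq_card_pos[OF finite_nonempty]
    by (elim eventually_mono) (simp add: field_simps)
  show ?thesis using e1 e2 unfolding good_time_def by eventually_elim auto
qed

definition pick_good_time :: "nat \<Rightarrow> nat \<Rightarrow> nat \<Rightarrow> nat" where
  "pick_good_time j T prev = (SOME N. prev < N \<and> good_time j T N)"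

lemma pick_good_time_spec: "prev < pick_good_time j T prev \<and> good_time j T (pick_good_time j T prev)"
proof -
  obtain N0 where "\<And>N. N \<ge> N0 \<Longrightarrow> good_time j T N"
    using eventually_good_time[of j T] unfolding eventually_sequentially by blast
  then have "prev < max N0 (Suc prev) \<and> good_time j T (max N0 (Suc prev))" by simp
  then show ?thesis unfolding pick_good_time_def by (rule someI)
qed

text \<open>
  Stage j selects a good averaging set \<Psi> (glue_time j) for the threshold block_start j and
  starts the next block beyond it; on block j, i.e. from block_start j to
  block_start (Suc j), the glued sum is the j-th partial Fourier sum.
\<close>

primrec glue_rec :: "nat \<Rightarrow> nat \<times> nat" where
  "glue_rec 0 = (pick_good_time 0 0 0, Max (insert 0 (\<Psi> (pick_good_time 0 0 0))) + 1)"
| "glue_rec (Suc j) = (pick_good_time (Suc j) (snd (glue_rec j)) (fst (glue_rec j)),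
      Max (insert (snd (glue_rec j)) (\<Psi> (pick_good_time (Suc j) (snd (glue_rec j)) (fst (glue_rec j))))) + 1)"

definition "glue_time j = fst (glue_rec j)"
definition "block_start j = (case j of 0 \<Rightarrow> 0 | Suc i \<Rightarrow> snd (glue_rec i))"
definition "block_index n = (LEAST j. n < block_start (Suc j))"
definition "glued_sum n = fourier_sum {..<block_index n} c t n"

lemma glue_rec_facts:
  "good_time j (block_start j) (glue_time j) \<and> block_start j < block_start (Suc j) \<and>
     (\<forall>n\<in>\<Psi> (glue_time j). n < block_start (Suc j)) \<and> glue_time j < glue_time (Suc j)"
proof -
  have fin: "finite (\<Psi> N)" for N using finite_nonempty by (rule finite_nonempty_seq_finite)
  have next_start: "block_start (Suc j) = Max (insert (block_start j) (\<Psi> (glue_time j))) + 1"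
    by (cases j) (simp_all add: glue_time_def block_start_def)
  show ?thesis
    using fin pick_good_time_spec unfolding next_start
    by (cases j) (auto simp: glue_time_def block_start_def le_imp_less_Suc)
qed

lemma strict_mono_block_start: "strict_mono block_start"
  unfolding strict_mono_Suc_iff using glue_rec_facts by blast

lemma strict_mono_glue_time: "strict_mono glue_time"
  unfolding strict_mono_Suc_iff using glue_rec_facts by blast

lemma block_index_eq:
  assumes "block_start j \<le> n" "n < block_start (Suc j)"
  shows "block_index n = j"
  unfolding block_index_def
proof (rule Least_equality)
  fix i assume "n < block_start (Suc i)"
  then show "j \<le> i" using assms(1) strict_mono_less_eq[OF strict_mono_block_start, of "Suc i" j] by simp
qed (rule assms(2))

lemma block_index_less:
  assumes "n < block_start j"
  shows "block_index n < j"
proof (cases j)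
  case (Suc i)
  then have "block_index n \<le> i" unfolding block_index_def using assms by (intro Least_le) simp
  then show ?thesis using Suc by simp
qed (use assms in \<open>simp add: block_start_def\<close>)

lemma sq_norm_glued_sum_diff_le_glue_bound:
  assumes "K \<le> j" "n < block_start j"
  shows "(cmod (glued_sum n - fourier_sum {..<K} c t n))\<^sup>2 \<le> glue_bound j"
proof -
  have "cmod (glued_sum n) \<le> (\<Sum>k<j. cmod (c k))"
    unfolding glued_sum_def using block_index_less[OF assms(2)] by (intro norm_fourier_sum_le) simp
  moreover have "cmod (fourier_sum {..<K} c t n) \<le> (\<Sum>k<j. cmod (c k))"
    using assms(1) by (rule norm_fourier_sum_le)
  ultimately have "cmod (glued_sum n - fourier_sum {..<K} c t n) \<le> 2 * (\<Sum>k<j. cmod (c k))"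
    using norm_triangle_ineq4[of "glued_sum n" "fourier_sum {..<K} c t n"] by linarith
  then show ?thesis unfolding glue_bound_def by (intro power_mono) simp_all
qed

lemma glued_sum_on_glue_time:
  assumes "n \<in> \<Psi> (glue_time j)" "block_start j \<le> n"
  shows "glued_sum n = fourier_sum {..<j} c t n"
  using assms glue_rec_facts block_index_eq unfolding glued_sum_def by metis

lemma favg_glued_sum_diff_le:
  assumes Kj: "K \<le> j"
  shows "favg \<Psi> (\<lambda>n. (cmod (glued_sum n - fourier_sum {..<K} c t n))\<^sup>2) (glue_time j)
    \<le> tail_sqsum c K + 2 / real (j+1)"
proof -
  let ?X = "\<Psi> (glue_time j)" and ?T = "block_start j"
  let ?h = "\<lambda>n. (cmod (glued_sum n - fourier_sum {..<K} c t n))\<^sup>2"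
  let ?d = "\<lambda>n. (cmod (fourier_sum {..<j} c t n - fourier_sum {..<K} c t n))\<^sup>2"
  have fin: "finite ?X" using finite_nonempty by (rule finite_nonempty_seq_finite)
  have cX: "0 < real (card ?X)" using finite_nonempty_seq_card_pos[OF finite_nonempty] by simp
  have good: "sum ?d ?X / real (card ?X) \<le> tail_sqsum c K + 1 / real (j+1)"
    "real (card (?X \<inter> {..<?T})) * glue_bound j \<le> real (card ?X) / real (j+1)"
    using glue_rec_facts[of j] Kj unfolding good_time_def favg_def by auto
  have "sum ?h (?X \<inter> {..<?T}) \<le> real (card (?X \<inter> {..<?T})) * glue_bound j"
    using sum_mono[of "?X \<inter> {..<?T}" ?h "\<lambda>_. glue_bound j"] sq_norm_glued_sum_diff_le_glue_bound[OF Kj]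
    by simp
  moreover have "sum ?h (?X - {..<?T}) \<le> sum ?d ?X"
  proof -
    have "sum ?h (?X - {..<?T}) = sum ?d (?X - {..<?T})"
      by (intro sum.cong refl) (auto simp: glued_sum_on_glue_time not_less)
    also have "\<dots> \<le> sum ?d ?X" by (rule sum_mono2) (use fin in auto)
    finally show ?thesis .
  qed
  ultimately have "sum ?h ?X \<le> real (card ?X) / real (j+1) + sum ?d ?X"
    using sum.Int_Diff[OF fin, of ?h "{..<?T}"] good(2) by linarith
  then have "sum ?h ?X / real (card ?X) \<le> (real (card ?X) / real (j+1) + sum ?d ?X) / real (card ?X)"
    by (rule divide_right_mono) simp
  also have "\<dots> = 1 / real (j+1) + sum ?d ?X / real (card ?X)"
    using cX by (simp add: add_divide_distrib)
  finally show ?thesis using good(1) unfolding favg_def by simp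
qed

lemma sqnorm_glued_sum_diff_le:
  "sqnorm (\<Psi> \<circ> glue_time) (\<lambda>n. glued_sum n - fourier_sum {..<K} c t n) \<le> ereal (tail_sqsum c K + 2 / real (K+1))"
proof (rule sqnorm_le_eventually, unfold eventually_sequentially, intro exI allI impI)
  fix N assume KN: "K \<le> N"
  have "2 / real (N+1) \<le> 2 / real (K+1)" using KN by (intro divide_left_mono) simp_all
  then show "favg (\<Psi> \<circ> glue_time) (\<lambda>n. (cmod (glued_sum n - fourier_sum {..<K} c t n))\<^sup>2) N
      \<le> tail_sqsum c K + 2 / real (K+1)"
    using favg_glued_sum_diff_le[OF KN] unfolding favg_comp by linarith
qed

lemma eventually_sqnorm_glued_sum_diff_less:
  assumes "0 < e"
  shows "eventually (\<lambda>K. sqnorm (\<Psi> \<circ> glue_time) (\<lambda>n. glued_sum n - fourier_sum {..<K} c t n) < ereal e) sequentially"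
  using eventually_tail_sqsum_small[OF square_summable assms]
  by eventually_elim (rule le_less_trans[OF sqnorm_glued_sum_diff_le], simp)

end

section \<open>Besicovitch functions and their orthogonal complement\<close>

lemma Bes_iff:
  "h \<in> Bes \<Psi> \<longleftrightarrow> (\<forall>e>0. \<exists>a. trig_poly a \<and> sqnorm \<Psi> (\<lambda>n. h n - a n) < ereal e)"
proof -
  have "(\<forall>\<epsilon>>0. P (\<epsilon>\<^sup>2)) \<longleftrightarrow> (\<forall>e>0. P e)" for P :: "real \<Rightarrow> bool"
  proof
    assume P: "\<forall>\<epsilon>>0. P (\<epsilon>\<^sup>2)"
    show "\<forall>e>0. P e"
    proof (intro allI impI)
      fix e :: real assume "e > 0"
      then show "P e" using P[rule_format, of "sqrt e"] by simp
    qed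
  qed simp
  then show ?thesis unfolding Bes_def by simp
qed

lemma Bes_perp_iff_fourier_coef:
  "g \<in> Bes_perp \<Psi> \<longleftrightarrow> g \<in> L2 \<Psi> \<and> (\<forall>\<theta>. 0 \<le> \<theta> \<and> \<theta> < 1 \<longrightarrow> fourier_coef \<Psi> g \<theta> \<longlonglongrightarrow> 0)"
proof -
  have "exp (2 * of_real pi * \<i> * of_nat n * of_real \<theta>) = echar \<theta> n" for n \<theta>
    unfolding echar_def by (simp add: mult_ac)
  then show ?thesis unfolding Bes_perp_def fourier_coef_def by simp
qed

lemma L2_comp:
  assumes "strict_mono \<sigma>" "g \<in> L2 \<Phi>"
  shows "g \<in> L2 (\<Phi> \<circ> \<sigma>)"
proof -
  have "sqnorm (\<Phi> \<circ> \<sigma>) g = limsup ((\<lambda>N. ereal (favg \<Phi> (\<lambda>n. (cmod (g n))\<^sup>2) N)) \<circ> \<sigma>)"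
    unfolding sqnorm_def favg_comp by (simp add: comp_def)
  also have "\<dots> \<le> sqnorm \<Phi> g"
    unfolding sqnorm_def by (rule limsup_subseq_mono[OF assms(1)])
  finally show ?thesis using assms(2) unfolding L2_def mem_Collect_eq by (rule order.strict_trans1)
qed

lemma Bes_imp_L2:
  assumes "h \<in> Bes \<Psi>"
  shows "h \<in> L2 \<Psi>"
proof -
  obtain a where a: "trig_poly a" "sqnorm \<Psi> (\<lambda>n. h n - a n) < ereal 1"
    using assms zero_less_one unfolding Bes_iff by blast
  obtain M where "\<And>n. cmod (a n) \<le> M" using trig_poly_bounded[OF a(1)] by blast
  then have "sqnorm \<Psi> (\<lambda>n. - a n) \<le> ereal (M\<^sup>2)" by (intro sqnorm_le_const) simp
  then have "(\<lambda>n. - a n) \<in> L2 \<Psi>" by (rule L2I)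
  moreover have "(\<lambda>n. h n - a n) \<in> L2 \<Psi>" using a(2) by (intro L2I) (rule less_imp_le)
  ultimately show ?thesis using L2_diff[of "\<lambda>n. h n - a n" \<Psi> "\<lambda>n. - a n"] by simp
qed

lemma fourier_coef_tendsto_0_approx:
  assumes approx: "\<And>e. e > 0 \<Longrightarrow> \<exists>h. fourier_coef \<Psi> h \<theta> \<longlonglongrightarrow> 0 \<and> sqnorm \<Psi> (\<lambda>n. g n - h n) < ereal e"
  shows "fourier_coef \<Psi> g \<theta> \<longlonglongrightarrow> 0"
proof (rule LIMSEQ_I)
  fix r :: real assume r: "0 < r"
  then have "(r/2)\<^sup>2 > 0" by simp
  then obtain h where h: "fourier_coef \<Psi> h \<theta> \<longlonglongrightarrow> 0" "sqnorm \<Psi> (\<lambda>n. g n - h n) < ereal ((r/2)\<^sup>2)"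
    using approx by blast
  have "eventually (\<lambda>N. cmod (fourier_coef \<Psi> (\<lambda>n. g n - h n) \<theta> N) < r/2) sequentially"
    using sqnorm_lessD[OF h(2)]
  proof (rule eventually_mono)
    fix N assume "favg \<Psi> (\<lambda>n. (cmod (g n - h n))\<^sup>2) N < (r/2)\<^sup>2"
    then have "(cmod (fourier_coef \<Psi> (\<lambda>n. g n - h n) \<theta> N))\<^sup>2 < (r/2)\<^sup>2"
      using norm_fourier_coef_power2_le[of \<Psi> "\<lambda>n. g n - h n" \<theta> N] by linarith
    then show "cmod (fourier_coef \<Psi> (\<lambda>n. g n - h n) \<theta> N) < r/2"
      by (rule power2_less_imp_less) (use r in simp)
  qed
  moreover have "eventually (\<lambda>N. cmod (fourier_coef \<Psi> h \<theta> N) < r/2) sequentially"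
    using order_tendstoD(2)[OF tendsto_norm_zero[OF h(1)], of "r/2"] r by simp
  ultimately have "eventually (\<lambda>N. norm (fourier_coef \<Psi> g \<theta> N - 0) < r) sequentially"
  proof eventually_elim
    case (elim N)
    have "fourier_coef \<Psi> g \<theta> N = fourier_coef \<Psi> (\<lambda>n. g n - h n) \<theta> N + fourier_coef \<Psi> h \<theta> N"
      by (simp add: fourier_coef_diff)
    then have "cmod (fourier_coef \<Psi> g \<theta> N)
        \<le> cmod (fourier_coef \<Psi> (\<lambda>n. g n - h n) \<theta> N) + cmod (fourier_coef \<Psi> h \<theta> N)"
      by (simp only: norm_triangle_ineq)
    then show ?case using elim by simp
  qed
  then show "\<exists>no. \<forall>n\<ge>no. norm (fourier_coef \<Psi> g \<theta> n - 0) < r" unfolding eventually_sequentially .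
qed

context spectral_data
begin

lemma glued_sum_Bes: "glued_sum \<in> Bes (\<Psi> \<circ> glue_time)"
  unfolding Bes_iff
proof (intro allI impI)
  fix e :: real assume "e > 0"
  then obtain K where "sqnorm (\<Psi> \<circ> glue_time) (\<lambda>n. glued_sum n - fourier_sum {..<K} c t n) < ereal e"
    using eventually_happens'[OF sequentially_bot eventually_sqnorm_glued_sum_diff_less] by blast
  then show "\<exists>a. trig_poly a \<and> sqnorm (\<Psi> \<circ> glue_time) (\<lambda>n. glued_sum n - a n) < ereal e"
    using trig_poly_fourier_sum[of "{..<K}" c t] by blast
qed

lemma fourier_coef_diff_partial_tendsto_0:
  assumes lim: "\<And>k. fourier_coef \<Psi> f (t k) \<longlonglongrightarrow> c k"
    and zero: "\<And>\<theta>. \<theta> \<in> {0..<1} - range t \<Longrightarrow> fourier_coef \<Psi> f \<theta> \<longlonglongrightarrow> 0"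
    and \<theta>: "0 \<le> \<theta>" "\<theta> < 1" and K: "\<And>k. \<theta> = t k \<Longrightarrow> k < K"
  shows "fourier_coef \<Psi> (\<lambda>n. f n - fourier_sum {..<K} c t n) \<theta> \<longlonglongrightarrow> 0"
proof -
  define L where "L = (if \<theta> \<in> range t then c (inv t \<theta>) else 0)"
  have "fourier_coef \<Psi> (fourier_sum {..<K} c t) \<theta> \<longlonglongrightarrow> (\<Sum>k<K. c k * (if \<theta> = t k then 1 else 0))"
    unfolding fourier_coef_fourier_sum
    by (intro tendsto_sum tendsto_mult tendsto_const favg_echar_diff_tendsto[OF foelner \<theta>] freq_bounds)
  also have "(\<Sum>k<K. c k * (if \<theta> = t k then 1 else 0)) = L"
  proof (cases "\<theta> \<in> range t")
    case True
    then obtain k\<^sub>0 where k\<^sub>0: "\<theta> = t k\<^sub>0" by blast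
    then have "(\<Sum>k<K. c k * (if \<theta> = t k then 1 else 0)) = (\<Sum>k<K. if k = k\<^sub>0 then c k else 0)"
      using inj_freq by (intro sum.cong) (auto simp: inj_eq)
    then show ?thesis using K[OF k\<^sub>0] k\<^sub>0 inj_freq by (simp add: L_def)
  qed (auto simp: L_def intro!: sum.neutral)
  finally have P: "fourier_coef \<Psi> (fourier_sum {..<K} c t) \<theta> \<longlonglongrightarrow> L" .
  have "fourier_coef \<Psi> f \<theta> \<longlonglongrightarrow> L"
  proof (cases "\<theta> \<in> range t")
    case True
    then show ?thesis using lim[of "inv t \<theta>"] by (simp add: L_def f_inv_into_f)
  qed (use zero \<theta> in \<open>simp add: L_def\<close>)
  moreover have "fourier_coef \<Psi> (\<lambda>n. f n - fourier_sum {..<K} c t n) \<theta>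
      = (\<lambda>N. fourier_coef \<Psi> f \<theta> N - fourier_coef \<Psi> (fourier_sum {..<K} c t) \<theta> N)"
    by (simp add: fun_eq_iff fourier_coef_diff)
  ultimately show ?thesis using tendsto_diff[OF _ P, of "fourier_coef \<Psi> f \<theta>" L] by simp
qed

lemma diff_glued_sum_Bes_perp:
  assumes f: "f \<in> L2 \<Psi>" and lim: "\<And>k. fourier_coef \<Psi> f (t k) \<longlonglongrightarrow> c k"
    and zero: "\<And>\<theta>. \<theta> \<in> {0..<1} - range t \<Longrightarrow> fourier_coef \<Psi> f \<theta> \<longlonglongrightarrow> 0"
  shows "(\<lambda>n. f n - glued_sum n) \<in> Bes_perp (\<Psi> \<circ> glue_time)"
  unfolding Bes_perp_iff_fourier_coef
proof (intro conjI allI impI)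
  show "(\<lambda>n. f n - glued_sum n) \<in> L2 (\<Psi> \<circ> glue_time)"
    by (intro L2_diff L2_comp[OF strict_mono_glue_time f] Bes_imp_L2 glued_sum_Bes)
  fix \<theta> :: real assume \<theta>: "0 \<le> \<theta> \<and> \<theta> < 1"
  show "fourier_coef (\<Psi> \<circ> glue_time) (\<lambda>n. f n - glued_sum n) \<theta> \<longlonglongrightarrow> 0"
  proof (rule fourier_coef_tendsto_0_approx)
    fix e :: real assume "e > 0"
    define K\<^sub>0 where "K\<^sub>0 = (if \<theta> \<in> range t then Suc (inv t \<theta>) else 0)"
    obtain K where K: "K\<^sub>0 \<le> K"
      "sqnorm (\<Psi> \<circ> glue_time) (\<lambda>n. glued_sum n - fourier_sum {..<K} c t n) < ereal e"
      using eventually_happens'[OF sequentially_bot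
          eventually_conj[OF eventually_ge_at_top eventually_sqnorm_glued_sum_diff_less[OF \<open>e > 0\<close>]]]
      by blast
    have "k < K" if "\<theta> = t k" for k
      using K(1) inj_freq that unfolding K\<^sub>0_def by auto
    then have "(fourier_coef \<Psi> (\<lambda>n. f n - fourier_sum {..<K} c t n) \<theta> \<circ> glue_time) \<longlonglongrightarrow> 0"
      using \<theta> by (intro LIMSEQ_subseq_LIMSEQ fourier_coef_diff_partial_tendsto_0 lim zero strict_mono_glue_time) auto
    moreover have "sqnorm (\<Psi> \<circ> glue_time) (\<lambda>n. (f n - glued_sum n) - (f n - fourier_sum {..<K} c t n)) < ereal e"
      using K(2) by (simp add: sqnorm_def norm_minus_commute)
    ultimately show "\<exists>h. fourier_coef (\<Psi> \<circ> glue_time) h \<theta> \<longlonglongrightarrow> 0 \<and>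
        sqnorm (\<Psi> \<circ> glue_time) (\<lambda>n. (f n - glued_sum n) - h n) < ereal e"
      by (intro exI[of _ "\<lambda>n. f n - fourier_sum {..<K} c t n"]) (simp add: fourier_coef_comp)
  qed
qed

end

lemma Bes_perp_orthogonal_trig_poly:
  assumes A: "fA \<in> Bes_perp \<Psi>" and a: "trig_poly a"
  shows "(\<lambda>N. favg \<Psi> (\<lambda>n. fA n * cnj (a n)) N) \<longlonglongrightarrow> 0"
proof -
  obtain S :: "nat set" and c \<theta> where "finite S" and a_eq: "a = (\<lambda>n. \<Sum>j\<in>S. c j * echar (\<theta> j) n)"
    using trig_polyE[OF a] by metis
  have "fA n * cnj (a n) = (\<Sum>j\<in>S. cnj (c j) * (fA n * echar (frac (- \<theta> j)) n))" for n
    unfolding a_eq by (simp add: cnj_echar echar_frac sum_distrib_left mult_ac)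
  then have eq: "favg \<Psi> (\<lambda>n. fA n * cnj (a n)) N = (\<Sum>j\<in>S. cnj (c j) * fourier_coef \<Psi> fA (frac (- \<theta> j)) N)" for N
    unfolding fourier_coef_def by (simp add: favg_sum favg_cmult)
  have "(\<lambda>N. \<Sum>j\<in>S. cnj (c j) * fourier_coef \<Psi> fA (frac (- \<theta> j)) N) \<longlonglongrightarrow> (\<Sum>j\<in>S. cnj (c j) * 0)"
    using A unfolding Bes_perp_iff_fourier_coef by (intro tendsto_sum tendsto_mult tendsto_const) (simp add: frac_lt_1)
  then show ?thesis unfolding eq by simp
qed

lemma Bes_perp_orthogonal_Bes:
  assumes A: "fA \<in> Bes_perp \<Psi>" and h: "h \<in> Bes \<Psi>"
  shows "(\<lambda>N. favg \<Psi> (\<lambda>n. fA n * cnj (h n)) N) \<longlonglongrightarrow> 0"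
proof (rule LIMSEQ_I)
  fix r :: real assume r: "0 < r"
  obtain R where R: "eventually (\<lambda>N. favg \<Psi> (\<lambda>n. (cmod (fA n))\<^sup>2) N < R) sequentially"
    using A L2_eventually_bounded unfolding Bes_perp_iff_fourier_coef by blast
  then obtain N where "favg \<Psi> (\<lambda>n. (cmod (fA n))\<^sup>2) N < R"
    using eventually_happens'[OF sequentially_bot] by blast
  then have "0 < R" using favg_sq_norm_nonneg[of \<Psi> fA N] by linarith
  define \<delta> where "\<delta> = r\<^sup>2 / (4 * R)"
  have \<delta>: "0 < \<delta>" "R * \<delta> = (r/2)\<^sup>2" using r \<open>0 < R\<close> by (simp_all add: \<delta>_def power2_eq_square)
  obtain a where a: "trig_poly a" "sqnorm \<Psi> (\<lambda>n. h n - a n) < ereal \<delta>"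
    using h \<delta>(1) unfolding Bes_iff by blast
  have "eventually (\<lambda>N. cmod (favg \<Psi> (\<lambda>n. fA n * cnj (h n - a n)) N) < r/2) sequentially"
    using R sqnorm_lessD[OF a(2)]
  proof eventually_elim
    case (elim N)
    let ?A = "favg \<Psi> (\<lambda>n. (cmod (fA n))\<^sup>2) N" and ?D = "favg \<Psi> (\<lambda>n. (cmod (h n - a n))\<^sup>2) N"
    have "?A * ?D \<le> ?A * \<delta>" using elim favg_sq_norm_nonneg[of \<Psi> fA N] by (intro mult_left_mono) simp_all
    also have "\<dots> < R * \<delta>" using elim \<delta>(1) by simp
    finally have "(cmod (favg \<Psi> (\<lambda>n. fA n * cnj (h n - a n)) N))\<^sup>2 < (r/2)\<^sup>2"
      using norm_favg_mult_cnj_power2_le[of \<Psi> fA "\<lambda>n. h n - a n" N] \<delta>(2) by linarith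
    then show ?case by (rule power2_less_imp_less) (use r in simp)
  qed
  moreover have "eventually (\<lambda>N. cmod (favg \<Psi> (\<lambda>n. fA n * cnj (a n)) N) < r/2) sequentially"
    using order_tendstoD(2)[OF tendsto_norm_zero[OF Bes_perp_orthogonal_trig_poly[OF A a(1)]], of "r/2"] r
    by simp
  ultimately have "eventually (\<lambda>N. norm (favg \<Psi> (\<lambda>n. fA n * cnj (h n)) N - 0) < r) sequentially"
  proof eventually_elim
    case (elim N)
    have "favg \<Psi> (\<lambda>n. fA n * cnj (h n)) N
        = favg \<Psi> (\<lambda>n. fA n * cnj (h n - a n)) N + favg \<Psi> (\<lambda>n. fA n * cnj (a n)) N"
      by (simp add: algebra_simps flip: favg_add)
    then have "cmod (favg \<Psi> (\<lambda>n. fA n * cnj (h n)) N)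
        \<le> cmod (favg \<Psi> (\<lambda>n. fA n * cnj (h n - a n)) N) + cmod (favg \<Psi> (\<lambda>n. fA n * cnj (a n)) N)"
      by (simp only: norm_triangle_ineq)
    then show ?case using elim by simp
  qed
  then show "\<exists>no. \<forall>n\<ge>no. norm (favg \<Psi> (\<lambda>n. fA n * cnj (h n)) n - 0) < r"
    unfolding eventually_sequentially .
qed

lemma sqnorm_diff_le_Bes:
  assumes fB: "fB \<in> Bes \<Psi>" and fA: "(\<lambda>n. f n - fB n) \<in> Bes_perp \<Psi>" and g: "g \<in> Bes \<Psi>"
  shows "sqnorm \<Psi> (\<lambda>n. f n - fB n) \<le> sqnorm \<Psi> (\<lambda>n. f n - g n)"
proof (rule sqnorm_le_plus_tendsto_0)
  let ?E = "\<lambda>N. favg \<Psi> (\<lambda>n. (f n - fB n) * cnj (g n - fB n)) N"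
  show "favg \<Psi> (\<lambda>n. (cmod (f n - fB n))\<^sup>2) N \<le> favg \<Psi> (\<lambda>n. (cmod (f n - g n))\<^sup>2) N + 2 * Re (?E N)" for N
  proof -
    have "(cmod (f n - fB n))\<^sup>2 \<le> (cmod (f n - g n))\<^sup>2 + 2 * Re ((f n - fB n) * cnj (g n - fB n))" for n
      using norm_diff_power2_eq[of "f n - fB n" "g n - fB n"] by simp
    then show ?thesis by (simp add: favg_mono favg_Re flip: favg_cmult favg_add)
  qed
  have "(\<lambda>N. favg \<Psi> (\<lambda>n. (f n - fB n) * cnj (g n)) N - favg \<Psi> (\<lambda>n. (f n - fB n) * cnj (fB n)) N) \<longlonglongrightarrow> 0 - 0"
    by (intro tendsto_diff Bes_perp_orthogonal_Bes fA fB g)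
  then have "?E \<longlonglongrightarrow> 0" by (simp add: algebra_simps flip: favg_diff)
  then have "(\<lambda>N. 2 * Re (?E N)) \<longlonglongrightarrow> 2 * Re 0" by (intro tendsto_intros)
  then show "(\<lambda>N. 2 * Re (?E N)) \<longlonglongrightarrow> 0" by simp
qed

lemma snorm_diff_eq_Inf:
  assumes fB: "fB \<in> Bes \<Psi>" and fA: "(\<lambda>n. f n - fB n) \<in> Bes_perp \<Psi>"
  shows "snorm \<Psi> (\<lambda>n. f n - fB n) = Inf {snorm \<Psi> (\<lambda>n. f n - g n) | g. g \<in> Bes \<Psi>}"
proof (rule cInf_eq_minimum[symmetric])
  show "snorm \<Psi> (\<lambda>n. f n - fB n) \<in> {snorm \<Psi> (\<lambda>n. f n - g n) | g. g \<in> Bes \<Psi>}"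
    using fB by blast
  fix x assume "x \<in> {snorm \<Psi> (\<lambda>n. f n - g n) | g. g \<in> Bes \<Psi>}"
  then obtain g where g: "g \<in> Bes \<Psi>" and x: "x = snorm \<Psi> (\<lambda>n. f n - g n)" by blast
  have "(\<lambda>n. f n - fB n) \<in> L2 \<Psi>" using fA by (simp add: Bes_perp_iff_fourier_coef)
  moreover have "(\<lambda>n. g n - fB n) \<in> L2 \<Psi>" by (rule L2_diff[OF Bes_imp_L2[OF g] Bes_imp_L2[OF fB]])
  ultimately have "(\<lambda>n. (f n - fB n) - (g n - fB n)) \<in> L2 \<Psi>" by (rule L2_diff)
  then have "sqnorm \<Psi> (\<lambda>n. f n - g n) \<noteq> \<infinity>" by (simp add: L2_def)
  then have "real_of_ereal (sqnorm \<Psi> (\<lambda>n. f n - fB n)) \<le> real_of_ereal (sqnorm \<Psi> (\<lambda>n. f n - g n))"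
    by (rule real_of_ereal_positive_mono[OF sqnorm_nonneg sqnorm_diff_le_Bes[OF fB fA g]])
  then show "snorm \<Psi> (\<lambda>n. f n - fB n) \<le> x" unfolding x snorm_def by simp
qed

section \<open>Clipping to an interval\<close>

lemma sq_norm_lipschitz_approx_le:
  assumes "cmod (\<phi> z - \<phi> w) \<le> K * cmod (z - w)" "cmod (\<phi> w - p w) \<le> \<eta>"
  shows "(cmod (\<phi> z - p w))\<^sup>2 \<le> 2 * K\<^sup>2 * (cmod (z - w))\<^sup>2 + 2 * \<eta>\<^sup>2"
proof -
  have "cmod (\<phi> z - p w) \<le> cmod (\<phi> z - \<phi> w) + cmod (\<phi> w - p w)"
    using norm_triangle_ineq[of "\<phi> z - \<phi> w" "\<phi> w - p w"] by simp
  also have "\<dots> \<le> K * cmod (z - w) + \<eta>" using assms by simp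
  finally have "(cmod (\<phi> z - p w))\<^sup>2 \<le> (K * cmod (z - w) + \<eta>)\<^sup>2"
    by (intro power_mono) simp_all
  also have "\<dots> \<le> 2 * K\<^sup>2 * (cmod (z - w))\<^sup>2 + 2 * \<eta>\<^sup>2"
    using sum_squares_bound[of "K * cmod (z - w)" \<eta>] by (simp add: power2_eq_square algebra_simps)
  finally show ?thesis .
qed

lemma favg_lipschitz_approx_le:
  assumes "\<And>z w. cmod (\<phi> z - \<phi> w) \<le> K * cmod (z - w)" "\<And>n. cmod (\<phi> (a n) - p (a n)) \<le> \<eta>"
  shows "favg \<Psi> (\<lambda>n. (cmod (\<phi> (h n) - p (a n)))\<^sup>2) N
    \<le> 2 * K\<^sup>2 * favg \<Psi> (\<lambda>n. (cmod (h n - a n))\<^sup>2) N + 2 * \<eta>\<^sup>2"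
proof -
  have "favg \<Psi> (\<lambda>n. (cmod (\<phi> (h n) - p (a n)))\<^sup>2) N
      \<le> favg \<Psi> (\<lambda>n. 2 * K\<^sup>2 * (cmod (h n - a n))\<^sup>2 + 2 * \<eta>\<^sup>2) N"
    using sq_norm_lipschitz_approx_le[where \<phi>=\<phi> and p=p, OF assms] by (rule favg_mono)
  also have "\<dots> \<le> 2 * K\<^sup>2 * favg \<Psi> (\<lambda>n. (cmod (h n - a n))\<^sup>2) N + 2 * \<eta>\<^sup>2"
    unfolding favg_add favg_cmult using favg_le_const[of "\<lambda>n. \<eta>\<^sup>2" "\<eta>\<^sup>2" \<Psi> N] by simp
  finally show ?thesis .
qed

lemma ex_pos_quadratic_less:
  fixes K e :: real
  assumes K: "1 < K" and e: "0 < e"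
  obtains \<eta> where "\<eta> > 0" "2 * K\<^sup>2 * \<eta>\<^sup>2 + 2 * \<eta>\<^sup>2 < e"
proof
  define \<eta> where "\<eta> = sqrt e / (2 * K)"
  show "\<eta> > 0" unfolding \<eta>_def using e K by simp
  have "2 * K\<^sup>2 * \<eta>\<^sup>2 = e / 2" "2 * \<eta>\<^sup>2 = e / (2 * K\<^sup>2)"
    unfolding \<eta>_def using e K by (simp_all add: power_divide power_mult_distrib)
  moreover have "1 < K\<^sup>2" using K by (simp add: one_less_power)
  then have "2 < 2 * K\<^sup>2" "0 < 2 * K\<^sup>2 * 2" by linarith+
  then have "e / (2 * K\<^sup>2) < e / 2" using divide_strict_left_mono[OF _ e] by blast
  ultimately show "2 * K\<^sup>2 * \<eta>\<^sup>2 + 2 * \<eta>\<^sup>2 < e" by linarith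
qed

text \<open>
  A Lipschitz function of a trigonometric polynomial is approximated by a polynomial in it
  (Stone-Weierstrass on the bounded range of the trigonometric polynomial), which is again a
  trigonometric polynomial.
\<close>

lemma Bes_lipschitz_comp:
  fixes \<phi> :: "complex \<Rightarrow> complex"
  assumes h: "h \<in> Bes \<Psi>" and lip: "\<And>z w. cmod (\<phi> z - \<phi> w) \<le> L * cmod (z - w)"
    and cont: "continuous_on UNIV \<phi>"
  shows "(\<lambda>n. \<phi> (h n)) \<in> Bes \<Psi>"
  unfolding Bes_iff
proof (intro allI impI)
  fix e :: real assume e: "e > 0"
  define K where "K = \<bar>L\<bar> + 2"
  have K: "K > 1" unfolding K_def by simp
  have lipK: "cmod (\<phi> z - \<phi> w) \<le> K * cmod (z - w)" for z w
  proof -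
    have "L * cmod (z - w) \<le> K * cmod (z - w)" unfolding K_def by (intro mult_right_mono) simp_all
    then show ?thesis using lip[of z w] by linarith
  qed
  obtain \<eta> where \<eta>: "\<eta> > 0" "2 * K\<^sup>2 * \<eta>\<^sup>2 + 2 * \<eta>\<^sup>2 < e" using ex_pos_quadratic_less[OF K e] .
  have "\<eta>\<^sup>2 > 0" using \<eta>(1) by simp
  then obtain a where a: "trig_poly a" "sqnorm \<Psi> (\<lambda>n. h n - a n) < ereal (\<eta>\<^sup>2)"
    using h unfolding Bes_iff by blast
  obtain M where M: "\<And>n. cmod (a n) \<le> M" using trig_poly_bounded[OF a(1)] by blast
  obtain p where p: "polynomial_function p" "\<forall>z\<in>cball 0 M. cmod (\<phi> z - p z) < \<eta>"
    using Stone_Weierstrass_polynomial_function[OF compact_cball continuous_on_subset[OF cont subset_UNIV] \<eta>(1)]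
    by blast
  have pa: "cmod (\<phi> (a n) - p (a n)) \<le> \<eta>" for n
    using p(2) M[of n] by (simp add: less_imp_le)
  have "eventually (\<lambda>N. favg \<Psi> (\<lambda>n. (cmod (\<phi> (h n) - p (a n)))\<^sup>2) N \<le> 2 * K\<^sup>2 * \<eta>\<^sup>2 + 2 * \<eta>\<^sup>2) sequentially"
    using sqnorm_lessD[OF a(2)]
  proof (rule eventually_mono)
    fix N assume "favg \<Psi> (\<lambda>n. (cmod (h n - a n))\<^sup>2) N < \<eta>\<^sup>2"
    then have "2 * K\<^sup>2 * favg \<Psi> (\<lambda>n. (cmod (h n - a n))\<^sup>2) N \<le> 2 * K\<^sup>2 * \<eta>\<^sup>2"
      using mult_left_mono[of _ "\<eta>\<^sup>2" "2 * K\<^sup>2"] by simp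
    then show "favg \<Psi> (\<lambda>n. (cmod (\<phi> (h n) - p (a n)))\<^sup>2) N \<le> 2 * K\<^sup>2 * \<eta>\<^sup>2 + 2 * \<eta>\<^sup>2"
      using favg_lipschitz_approx_le[where \<phi>=\<phi> and p=p and a=a and h=h and \<Psi>=\<Psi> and N=N, OF lipK pa] by linarith
  qed
  then have "sqnorm \<Psi> (\<lambda>n. \<phi> (h n) - p (a n)) < ereal e"
    using \<eta>(2) by (intro le_less_trans[OF sqnorm_le_eventually]) simp_all
  then show "\<exists>b. trig_poly b \<and> sqnorm \<Psi> (\<lambda>n. \<phi> (h n) - b n) < ereal e"
    using trig_poly_polynomial_comp[OF p(1) a(1)] by blast
qed

definition clip :: "real \<Rightarrow> real \<Rightarrow> complex \<Rightarrow> complex" where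
  "clip \<alpha> \<beta> z = complex_of_real (max \<alpha> (min \<beta> (Re z)))"

lemma diff_clip_lipschitz: "cmod ((z - clip \<alpha> \<beta> z) - (w - clip \<alpha> \<beta> w)) \<le> 2 * cmod (z - w)"
proof -
  have "cmod (clip \<alpha> \<beta> z - clip \<alpha> \<beta> w) = \<bar>max \<alpha> (min \<beta> (Re z)) - max \<alpha> (min \<beta> (Re w))\<bar>"
    unfolding clip_def by (simp flip: of_real_diff)
  also have "\<dots> \<le> \<bar>Re z - Re w\<bar>" by (auto simp: max_def min_def abs_if)
  also have "\<dots> \<le> cmod (z - w)" using abs_Re_le_cmod[of "z - w"] by simp
  finally show ?thesis
    using norm_triangle_ineq4[of "z - w" "clip \<alpha> \<beta> z - clip \<alpha> \<beta> w"] by (simp add: algebra_simps)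
qed

lemma continuous_on_diff_clip: "continuous_on UNIV (\<lambda>z. z - clip \<alpha> \<beta> z)"
  unfolding clip_def by (intro continuous_intros)

text \<open>The variational inequality characterising the nearest point of a convex set.\<close>

lemma clip_variational_ineq:
  assumes "\<alpha> \<le> x" "x \<le> \<beta>"
  shows "(cmod (z - clip \<alpha> \<beta> z))\<^sup>2 \<le> - Re ((complex_of_real x - z) * cnj (z - clip \<alpha> \<beta> z))"
proof -
  define y where "y = max \<alpha> (min \<beta> (Re z))"
  have "(Re z - y) * (x - y) \<le> 0"
    unfolding y_def using assms
    by (cases "Re z < \<alpha>"; cases "Re z > \<beta>") (auto simp: mult_nonpos_nonneg mult_nonneg_nonpos)
  moreover have "(cmod (z - clip \<alpha> \<beta> z))\<^sup>2 = (Re z - y)\<^sup>2 + (Im z)\<^sup>2"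
    unfolding clip_def y_def[symmetric] by (simp add: cmod_power2)
  moreover have "- Re ((complex_of_real x - z) * cnj (z - clip \<alpha> \<beta> z)) = (Re z - x) * (Re z - y) + (Im z)\<^sup>2"
    unfolding clip_def y_def[symmetric] by (simp add: power2_eq_square algebra_simps)
  ultimately show ?thesis by (simp add: power2_eq_square algebra_simps)
qed

lemma fourier_coef_tendsto_0_if_sqnorm_0:
  assumes "sqnorm \<Psi> d = 0"
  shows "fourier_coef \<Psi> d \<theta> \<longlonglongrightarrow> 0"
proof (rule fourier_coef_tendsto_0_approx)
  fix e :: real assume "e > 0"
  have "fourier_coef \<Psi> (\<lambda>n. 0) \<theta> = (\<lambda>N. 0)" by (simp add: fun_eq_iff fourier_coef_def favg_def)
  then show "\<exists>h. fourier_coef \<Psi> h \<theta> \<longlonglongrightarrow> 0 \<and> sqnorm \<Psi> (\<lambda>n. d n - h n) < ereal e"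
    using assms \<open>e > 0\<close> by (intro exI[of _ "\<lambda>n. 0"]) simp
qed

lemma Bes_perp_add_null:
  assumes A: "fA \<in> Bes_perp \<Psi>" and d: "sqnorm \<Psi> d = 0"
  shows "(\<lambda>n. fA n + d n) \<in> Bes_perp \<Psi>"
  unfolding Bes_perp_iff_fourier_coef
proof (intro conjI allI impI)
  have "(\<lambda>n. - d n) \<in> L2 \<Psi>" using d unfolding L2_def sqnorm_def by simp
  with A show "(\<lambda>n. fA n + d n) \<in> L2 \<Psi>"
    using L2_diff[of fA \<Psi> "\<lambda>n. - d n"] unfolding Bes_perp_iff_fourier_coef by simp
  fix \<theta> :: real assume "0 \<le> \<theta> \<and> \<theta> < 1"
  then have "(\<lambda>N. fourier_coef \<Psi> fA \<theta> N + fourier_coef \<Psi> d \<theta> N) \<longlonglongrightarrow> 0 + 0"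
    using A unfolding Bes_perp_iff_fourier_coef
    by (intro tendsto_add fourier_coef_tendsto_0_if_sqnorm_0[OF d]) simp
  then show "fourier_coef \<Psi> (\<lambda>n. fA n + d n) \<theta> \<longlonglongrightarrow> 0"
    by (simp add: fourier_coef_add[abs_def])
qed

lemma Bes_diff_null:
  assumes h: "h \<in> Bes \<Psi>" and d: "sqnorm \<Psi> d = 0"
  shows "(\<lambda>n. h n - d n) \<in> Bes \<Psi>"
  unfolding Bes_iff
proof (intro allI impI)
  fix e :: real assume "e > 0"
  then obtain a where a: "trig_poly a" "sqnorm \<Psi> (\<lambda>n. h n - a n) < ereal (e / 2)"
    using h unfolding Bes_iff by (meson half_gt_zero)
  have "sqnorm \<Psi> (\<lambda>n. (h n - a n) - d n) \<le> 2 * sqnorm \<Psi> (\<lambda>n. h n - a n)"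
    using sqnorm_diff_le[of \<Psi> "\<lambda>n. h n - a n" d] d by simp
  also have "\<dots> < ereal e"
    using a(2) sqnorm_nonneg[of \<Psi> "\<lambda>n. h n - a n"] by (cases "sqnorm \<Psi> (\<lambda>n. h n - a n)") auto
  finally show "\<exists>a. trig_poly a \<and> sqnorm \<Psi> (\<lambda>n. h n - d n - a n) < ereal e"
    using a(1) by (auto simp: algebra_simps)
qed

lemma sqnorm_diff_clip_eq_0:
  assumes fB: "fB \<in> Bes \<Psi>" and fA: "(\<lambda>n. f n - fB n) \<in> Bes_perp \<Psi>"
    and real: "\<And>n. f n = complex_of_real (Re (f n))" and rng: "\<And>n. \<alpha> \<le> Re (f n) \<and> Re (f n) \<le> \<beta>"
  shows "sqnorm \<Psi> (\<lambda>n. fB n - clip \<alpha> \<beta> (fB n)) = 0"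
proof -
  let ?d = "\<lambda>n. fB n - clip \<alpha> \<beta> (fB n)"
  let ?E = "\<lambda>N. favg \<Psi> (\<lambda>n. (f n - fB n) * cnj (?d n)) N"
  have "(\<lambda>N. cmod (?E N)) \<longlonglongrightarrow> 0"
    using Bes_perp_orthogonal_Bes[OF fA Bes_lipschitz_comp[OF fB diff_clip_lipschitz continuous_on_diff_clip]]
    by (rule tendsto_norm_zero)
  moreover have "favg \<Psi> (\<lambda>n. (cmod (?d n))\<^sup>2) N \<le> favg \<Psi> (\<lambda>n. (cmod (0::complex))\<^sup>2) N + cmod (?E N)" for N
  proof -
    have "favg \<Psi> (\<lambda>n. (cmod (?d n))\<^sup>2) N \<le> favg \<Psi> (\<lambda>n. - Re ((f n - fB n) * cnj (?d n))) N"
    proof (rule favg_mono)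
      fix n
      show "(cmod (?d n))\<^sup>2 \<le> - Re ((f n - fB n) * cnj (?d n))"
        using clip_variational_ineq[of \<alpha> "Re (f n)" \<beta> "fB n"] rng[of n] real[of n] by simp
    qed
    also have "\<dots> = - Re (?E N)" by (simp only: favg_neg favg_Re)
    also have "\<dots> \<le> cmod (?E N)" using abs_Re_le_cmod[of "?E N"] by linarith
    finally show ?thesis by (simp add: favg_def)
  qed
  ultimately have "sqnorm \<Psi> ?d \<le> sqnorm \<Psi> (\<lambda>n. 0)"
    by (intro sqnorm_le_plus_tendsto_0) simp_all
  also have "sqnorm \<Psi> (\<lambda>n. 0) = 0" by (simp add: sqnorm_eq_0_iff favg_def)
  finally show ?thesis using sqnorm_nonneg[of \<Psi> ?d] by simp
qed

section \<open>The decomposition\<close>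

lemma exists_Bes_decomposition:
  assumes F: "foelner \<Phi>" and f: "f \<in> L2 \<Phi>"
  obtains \<sigma> fB where "strict_mono \<sigma>" "fB \<in> Bes (\<Phi> \<circ> \<sigma>)" "(\<lambda>n. f n - fB n) \<in> Bes_perp (\<Phi> \<circ> \<sigma>)"
proof -
  obtain B where "\<And>N. favg \<Phi> (\<lambda>n. (cmod (f n))\<^sup>2) N \<le> B" using L2_favg_bounded[OF f] by blast
  then obtain \<sigma> t c where \<sigma>: "strict_mono \<sigma>" and spectrum: "inj t" "range t \<subseteq> {0..<1}"
    "summable (\<lambda>k. (cmod (c k))\<^sup>2)"
    and lim: "\<And>k. fourier_coef (\<Phi> \<circ> \<sigma>) f (t k) \<longlonglongrightarrow> c k"
    and zero: "\<And>\<theta>. \<theta> \<in> {0..<1} - range t \<Longrightarrow> fourier_coef (\<Phi> \<circ> \<sigma>) f \<theta> \<longlonglongrightarrow> 0"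
    using spectral_extraction[OF F] by metis
  interpret spectral_data "\<Phi> \<circ> \<sigma>" c t
    using foelner_comp[OF F \<sigma>] spectrum by unfold_locales
  show ?thesis
    using that[of "\<sigma> \<circ> glue_time" glued_sum] strict_mono_o[OF \<sigma> strict_mono_glue_time] glued_sum_Bes
      diff_glued_sum_Bes_perp[OF L2_comp[OF \<sigma> f] lim zero]
    by (simp add: o_assoc)
qed

text \<open>
  The clipping interval [inf Re f, sup Re f] is the smallest interval containing the values of f.
\<close>

lemma Bes_decomposition_in_range:
  assumes fB\<^sub>0: "fB\<^sub>0 \<in> Bes \<Psi>" and fA\<^sub>0: "(\<lambda>n. f n - fB\<^sub>0 n) \<in> Bes_perp \<Psi>"
  obtains fB where "fB \<in> Bes \<Psi>" "(\<lambda>n. f n - fB n) \<in> Bes_perp \<Psi>"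
    "\<And>a b. \<forall>n. f n \<in> complex_of_real ` {a..b} \<Longrightarrow> \<forall>n. fB n \<in> complex_of_real ` {a..b}"
proof (cases "\<exists>a b. \<forall>n. f n \<in> complex_of_real ` {a..b}")
  case True
  then obtain a\<^sub>0 b\<^sub>0 where ab: "\<forall>n. f n \<in> complex_of_real ` {a\<^sub>0..b\<^sub>0}" by blast
  have real: "f n = complex_of_real (Re (f n))" and bounds: "a\<^sub>0 \<le> Re (f n)" "Re (f n) \<le> b\<^sub>0" for n
    using ab[rule_format, of n] by (auto simp: image_iff)
  have bdd: "bdd_below (range (\<lambda>n. Re (f n)))" "bdd_above (range (\<lambda>n. Re (f n)))"
    using bounds by (auto intro: bdd_belowI[of _ a\<^sub>0] bdd_aboveI[of _ b\<^sub>0])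
  define \<alpha> where "\<alpha> = Inf (range (\<lambda>n. Re (f n)))"
  define \<beta> where "\<beta> = Sup (range (\<lambda>n. Re (f n)))"
  have rng: "\<alpha> \<le> Re (f n) \<and> Re (f n) \<le> \<beta>" for n
    unfolding \<alpha>_def \<beta>_def using bdd by (auto intro: cInf_lower cSup_upper)
  let ?d = "\<lambda>n. fB\<^sub>0 n - clip \<alpha> \<beta> (fB\<^sub>0 n)"
  have null: "sqnorm \<Psi> ?d = 0" by (rule sqnorm_diff_clip_eq_0[OF fB\<^sub>0 fA\<^sub>0 real rng])
  have "(\<lambda>n. fB\<^sub>0 n - ?d n) \<in> Bes \<Psi>" by (rule Bes_diff_null[OF fB\<^sub>0 null])
  moreover have "(\<lambda>n. (f n - fB\<^sub>0 n) + ?d n) \<in> Bes_perp \<Psi>" by (rule Bes_perp_add_null[OF fA\<^sub>0 null])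
  moreover have "clip \<alpha> \<beta> (fB\<^sub>0 n) \<in> complex_of_real ` {a..b}"
    if "\<forall>n. f n \<in> complex_of_real ` {a..b}" for a b n
  proof -
    have "a \<le> Re (f m) \<and> Re (f m) \<le> b" for m using that[rule_format, of m] by (auto simp: image_iff)
    then have "a \<le> \<alpha>" "\<beta> \<le> b" unfolding \<alpha>_def \<beta>_def by (auto intro: cINF_greatest cSUP_least)
    moreover have "\<alpha> \<le> \<beta>" using rng[of 0] by linarith
    ultimately have "max \<alpha> (min \<beta> (Re (fB\<^sub>0 n))) \<in> {a..b}" by auto
    then show ?thesis unfolding clip_def by (rule imageI)
  qed
  ultimately show ?thesis using that[of "\<lambda>n. clip \<alpha> \<beta> (fB\<^sub>0 n)"] by (simp add: algebra_simps)
qed (use that fB\<^sub>0 fA\<^sub>0 in blast)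

theorem theorem3p6:
  fixes \<Phi> :: "nat \<Rightarrow> nat set" and f :: "nat \<Rightarrow> complex"
  assumes "foelner \<Phi>" and "f \<in> L2 \<Phi>"
  shows "\<exists>\<sigma>::nat \<Rightarrow> nat. strict_mono \<sigma> \<and>
    (\<exists>fB fA. fB \<in> Bes (\<Phi> \<circ> \<sigma>) \<and> fA \<in> Bes_perp (\<Phi> \<circ> \<sigma>) \<and> f = (\<lambda>n. fB n + fA n) \<and>
      snorm (\<Phi> \<circ> \<sigma>) (\<lambda>n. f n - fB n) =
        Inf {snorm (\<Phi> \<circ> \<sigma>) (\<lambda>n. f n - g n) | g. g \<in> Bes (\<Phi> \<circ> \<sigma>)} \<and>
      (\<forall>a b::real. (\<forall>n. f n \<in> complex_of_real ` {a..b}) \<longrightarrow>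
                   (\<forall>n. fB n \<in> complex_of_real ` {a..b})))"
proof -
  obtain \<sigma> fB\<^sub>0 where \<sigma>: "strict_mono \<sigma>"
    and fB\<^sub>0: "fB\<^sub>0 \<in> Bes (\<Phi> \<circ> \<sigma>)" and fA\<^sub>0: "(\<lambda>n. f n - fB\<^sub>0 n) \<in> Bes_perp (\<Phi> \<circ> \<sigma>)"
    using exists_Bes_decomposition[OF assms] .
  obtain fB where fB: "fB \<in> Bes (\<Phi> \<circ> \<sigma>)" and fA: "(\<lambda>n. f n - fB n) \<in> Bes_perp (\<Phi> \<circ> \<sigma>)"
    and range: "\<And>a b. \<forall>n. f n \<in> complex_of_real ` {a..b} \<Longrightarrow> \<forall>n. fB n \<in> complex_of_real ` {a..b}"
    using Bes_decomposition_in_range[OF fB\<^sub>0 fA\<^sub>0] by blast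
  have "f = (\<lambda>n. fB n + (f n - fB n))" by simp
  then show ?thesis
    using \<sigma> fB fA range snorm_diff_eq_Inf[OF fB fA] by blast
qed

end
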